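(* Let $G$ be a connected graph and let $\mathcal T=(T,\mathcal X)$ be a tree-cut decomposition of $G$ of finite adhesion whose parts are exactly the $\omega$-edge blocks of $G$ and such that for every edge $t_1t_2\in E(T)$ there is an edge of $G$ between $X_{t_1}$ and $X_{t_2}$. Then the map $\varphi_{\mathcal T}:\Omega_E(G)\to\|T\|$ is a topological embedding. Moreover: (1) $\varphi_{\mathcal T}$ restricts to a bijection between the edge-ends of $G$ that are not edge-dominated by any vertex and the ends of $T$; (2) $\varphi_{\mathcal T}$ restricts to an injection from the edge-dominated edge-ends of $G$ into $V(T)$, and for each such edge-end $\omega$ the vertices in $X_{\varphi_{\mathcal T}(\omega)}$ are precisely the vertices of $G$ that edge-dominate $\omega$.
   Context: Rays are one-way infinite paths; two rays are edge-equivalent if no finite edge set separates them; the classes are edge-ends, forming $\Omega_E(G)$. For finite $F\subseteq E(G)$ and an edge-end $\omega$, $C(F,\omega)$ is the unique component of $G-F$ containing a tail of every ray in $\omega$. An edge-end $\omega$ is edge-dominated by a vertex $v$ if $v\in C(F,\omega)$ for every finite $F\subseteq E(G)$. A region of a graph $H$ is a connected induced subgraph $C$ with finite boundary $\partial C$; $\Omega_E(C)$ is the set of edge-ends having a ray in $C$, $\|C\|=V(C)\cup\Omega_E(C)$. The sets $\Omega_E(C)$ (resp. $\|C\|$) for regions $C$ form a basis of $\Omega_E(H)$ (resp. $\|H\|=V(H)\cup\Omega_E(H)$); for a tree $T$, $\Omega_E(T)$ is its usual end space $\Omega(T)$. The $\omega$-edge blocks of $G$ are the classes of the relation "$x,y$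 cannot be separated by finitely many edges". A tree-cut decomposition $(T,\mathcal X)$ is a tree $T$ with a partition $\mathcal X=\{X_t:t\in V(T)\}$ of $V(G)$ into nonempty parts; the adhesion set of $e=t_1t_2\in E(T)$ is $X_e=E_G(\bigcup_{t\in T_1}X_t,\bigcup_{t\in T_2}X_t)$ where $T_1\ni t_1,T_2\ni t_2$ are the components of $T-e$; finite adhesion means all $X_e$ finite. Definition of $\varphi_{\mathcal T}$: for an edge-end $\omega$ and $e\in E(T)$, since $X_e$ is finite, every ray of $\omega$ has a tail in $G[\bigcup_{t\in T_i}X_t]$ for the same unique $i\in\{1,2\}$; orient $e$ towards $T_i$. Then either all edges of $T$ are oriented towards a unique node $t$, or towards a unique end of $T$; $\varphi_{\mathcal T}(\omega)$ is this node or end. *)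

theory Defs
  imports "HOL-Analysis.Analysis"
begin

definition graph :: "'v set \<Rightarrow> 'v set set \<Rightarrow> bool" where
  "graph V E \<longleftrightarrow> (\<forall>e\<in>E. \<exists>x y. x \<noteq> y \<and> x \<in> V \<and> y \<in> V \<and> e = {x, y})"

definition adj :: "'v set \<Rightarrow> 'v set set \<Rightarrow> 'v \<Rightarrow> 'v \<Rightarrow> bool" where
  "adj V E x y \<longleftrightarrow> x \<in> V \<and> y \<in> V \<and> {x, y} \<in> E"

text \<open>conn V E x y: x and y are joined by a path in the graph (V, E) (restricted to edges inside V,
  so conn C E is connectivity in the induced subgraph on C).\<close>
definition conn :: "'v set \<Rightarrow> 'v set set \<Rightarrow> 'v \<Rightarrow> 'v \<Rightarrow> bool" where
  "conn V E x y \<longleftrightarrow> (adj V E)\<^sup>*\<^sup>* x y"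

definition connected_graph :: "'v set \<Rightarrow> 'v set set \<Rightarrow> bool" where
  "connected_graph V E \<longleftrightarrow> V \<noteq> {} \<and> (\<forall>x\<in>V. \<forall>y\<in>V. conn V E x y)"

definition tree :: "'n set \<Rightarrow> 'n set set \<Rightarrow> bool" where
  "tree N ET \<longleftrightarrow> graph N ET \<and> connected_graph N ET \<and>
     (\<forall>x y. {x, y} \<in> ET \<longrightarrow> \<not> conn N (ET - {{x, y}}) x y)"

definition ray :: "'v set \<Rightarrow> 'v set set \<Rightarrow> (nat \<Rightarrow> 'v) \<Rightarrow> bool" where
  "ray V E r \<longleftrightarrow> inj r \<and> (\<forall>i. r i \<in> V \<and> {r i, r (Suc i)} \<in> E)"

definition has_tail_in :: "(nat \<Rightarrow> 'v) \<Rightarrow> 'v set \<Rightarrow> bool" where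
  "has_tail_in r S \<longleftrightarrow> (\<exists>n. \<forall>i\<ge>n. r i \<in> S)"

definition edge_equiv :: "'v set \<Rightarrow> 'v set set \<Rightarrow> (nat \<Rightarrow> 'v) \<Rightarrow> (nat \<Rightarrow> 'v) \<Rightarrow> bool" where
  "edge_equiv V E r s \<longleftrightarrow>
     (\<forall>F. finite F \<and> F \<subseteq> E \<longrightarrow> (\<exists>n. \<forall>i\<ge>n. \<forall>j\<ge>n. conn V (E - F) (r i) (s j)))"

definition edge_ends :: "'v set \<Rightarrow> 'v set set \<Rightarrow> (nat \<Rightarrow> 'v) set set" where
  "edge_ends V E = {{s. ray V E s \<and> edge_equiv V E r s} | r. ray V E r}"

definition edge_dominates :: "'v set \<Rightarrow> 'v set set \<Rightarrow> 'v \<Rightarrow> (nat \<Rightarrow> 'v) set \<Rightarrow> bool" where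
  "edge_dominates V E v \<omega> \<longleftrightarrow> v \<in> V \<and>
     (\<forall>F. finite F \<and> F \<subseteq> E \<longrightarrow> (\<forall>r\<in>\<omega>. \<exists>n. \<forall>i\<ge>n. conn V (E - F) v (r i)))"

definition boundary :: "'v set set \<Rightarrow> 'v set \<Rightarrow> 'v set set" where
  "boundary E C = {e \<in> E. e \<inter> C \<noteq> {} \<and> e - C \<noteq> {}}"

definition region :: "'v set \<Rightarrow> 'v set set \<Rightarrow> 'v set \<Rightarrow> bool" where
  "region V E C \<longleftrightarrow> C \<subseteq> V \<and> connected_graph C E \<and> finite (boundary E C)"

definition region_ends :: "'v set \<Rightarrow> 'v set set \<Rightarrow> 'v set \<Rightarrow> (nat \<Rightarrow> 'v) set set" where
  "region_ends V E C = {\<omega> \<in> edge_ends V E. \<exists>r\<in>\<omega>. \<forall>i. r i \<in> C}"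

definition edge_end_top :: "'v set \<Rightarrow> 'v set set \<Rightarrow> (nat \<Rightarrow> 'v) set topology" where
  "edge_end_top V E = subtopology
     (topology_generated_by {region_ends V E C | C. region V E C}) (edge_ends V E)"

text \<open>\<parallel>H\<parallel> = V(H) \<union> \<Omega>_E(H), vertices tagged Inl, edge-ends tagged Inr.\<close>
definition full_space :: "'n set \<Rightarrow> 'n set set \<Rightarrow> ('n + (nat \<Rightarrow> 'n) set) set" where
  "full_space N ET = Inl ` N \<union> Inr ` edge_ends N ET"

definition full_top :: "'n set \<Rightarrow> 'n set set \<Rightarrow> ('n + (nat \<Rightarrow> 'n) set) topology" where
  "full_top N ET = subtopology
     (topology_generated_by {Inl ` C \<union> Inr ` region_ends N ET C | C. region N ET C})
     (full_space N ET)"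

definition tree_cut_decomp ::
  "'v set \<Rightarrow> 'v set set \<Rightarrow> 'n set \<Rightarrow> 'n set set \<Rightarrow> ('n \<Rightarrow> 'v set) \<Rightarrow> bool" where
  "tree_cut_decomp V E N ET X \<longleftrightarrow> tree N ET \<and>
     (\<forall>t\<in>N. X t \<noteq> {}) \<and> (\<Union>t\<in>N. X t) = V \<and>
     (\<forall>t\<in>N. \<forall>s\<in>N. t \<noteq> s \<longrightarrow> X t \<inter> X s = {})"

definition tside :: "'n set \<Rightarrow> 'n set set \<Rightarrow> 'n set \<Rightarrow> 'n \<Rightarrow> 'n set" where
  "tside N ET e u = {s \<in> N. conn N (ET - {e}) u s}"

definition adhesion ::
  "'v set set \<Rightarrow> 'n set \<Rightarrow> 'n set set \<Rightarrow> ('n \<Rightarrow> 'v set) \<Rightarrow> 'n \<Rightarrow> 'n \<Rightarrow> 'v set set" where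
  "adhesion E N ET X t1 t2 =
     {e \<in> E. \<exists>x y. e = {x, y} \<and> x \<in> (\<Union>t\<in>tside N ET {t1, t2} t1. X t)
                              \<and> y \<in> (\<Union>t\<in>tside N ET {t1, t2} t2. X t)}"

definition finite_adhesion ::
  "'v set set \<Rightarrow> 'n set \<Rightarrow> 'n set set \<Rightarrow> ('n \<Rightarrow> 'v set) \<Rightarrow> bool" where
  "finite_adhesion E N ET X \<longleftrightarrow> (\<forall>t1 t2. {t1, t2} \<in> ET \<longrightarrow> finite (adhesion E N ET X t1 t2))"

definition edge_insep :: "'v set \<Rightarrow> 'v set set \<Rightarrow> ('v \<times> 'v) set" where
  "edge_insep V E = {(x, y). x \<in> V \<and> y \<in> V \<and>
     (\<forall>F. finite F \<and> F \<subseteq> E \<longrightarrow> conn V (E - F) x y)}"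

definition edge_blocks :: "'v set \<Rightarrow> 'v set set \<Rightarrow> 'v set set" where
  "edge_blocks V E = V // edge_insep V E"

definition oriented_towards ::
  "'n set \<Rightarrow> 'n set set \<Rightarrow> ('n \<Rightarrow> 'v set) \<Rightarrow> (nat \<Rightarrow> 'v) set \<Rightarrow> 'n set \<Rightarrow> 'n \<Rightarrow> bool" where
  "oriented_towards N ET X \<omega> e u \<longleftrightarrow> (\<forall>r\<in>\<omega>. has_tail_in r (\<Union>t\<in>tside N ET e u. X t))"

definition points_to ::
  "'n set \<Rightarrow> 'n set set \<Rightarrow> ('n \<Rightarrow> 'v set) \<Rightarrow> (nat \<Rightarrow> 'v) set \<Rightarrow> 'n + (nat \<Rightarrow> 'n) set \<Rightarrow> bool" where
  "points_to N ET X \<omega> z \<longleftrightarrow> (case z of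
      Inl t \<Rightarrow> (\<forall>e\<in>ET. \<forall>u\<in>e. t \<in> tside N ET e u \<longrightarrow> oriented_towards N ET X \<omega> e u)
    | Inr \<eta> \<Rightarrow> (\<forall>e\<in>ET. \<forall>u\<in>e. (\<forall>q\<in>\<eta>. has_tail_in q (tside N ET e u))
                                   \<longrightarrow> oriented_towards N ET X \<omega> e u))"

definition phi ::
  "'n set \<Rightarrow> 'n set set \<Rightarrow> ('n \<Rightarrow> 'v set) \<Rightarrow> (nat \<Rightarrow> 'v) set \<Rightarrow> 'n + (nat \<Rightarrow> 'n) set" where
  "phi N ET X \<omega> = (THE z. z \<in> full_space N ET \<and> points_to N ET X \<omega> z)"

end

(* Every edge t1 t2 of T cuts G along its finite adhesion set, so each edge-end lies on one
   side of it, and phi sends an edge-end to the node or end of T towards which all these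
   orientations point. Because the parts are the omega-edge blocks and adjacent parts are
   joined by an edge, the union of the parts on one side of a tree edge is connected.

   If omega points to the node t, a component of G - F containing a tail of omega must meet
   X_t: otherwise the tail would be trapped in one of the finitely many branches at t that the
   component meets. So the vertices of X_t edge-dominate omega, and conversely a dominating
   vertex forces every edge to be oriented towards its part. Edge-ends with the same image
   cannot be separated, through a common dominating vertex or through the connected union of
   parts beyond a far tree edge; an end of T is hit by a ray of G threaded through the nested
   sides along a ray of T. Finally the bases match up: the union of the parts of a region of T
   contains a region of G around each preimage, and a region of G around omega contains the
   preimage of a side of T, or of the component of nodes whose parts lie inside it. *)

theory Submission
  imports Defs "HOL-Library.Transitive_Closure_Table"
begin

definition adj_closed :: "'v set \<Rightarrow> 'v set set \<Rightarrow> 'v set \<Rightarrow> bool" where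
  "adj_closed V E S \<longleftrightarrow> (\<forall>a b. a \<in> S \<longrightarrow> adj V E a b \<longrightarrow> b \<in> S)"

lemma adj_sym: "adj V E x y = adj V E y x"
  unfolding adj_def by (auto simp: insert_commute)

lemma conn_refl [simp]: "conn V E x x"
  unfolding conn_def by simp

lemma conn_step: "conn V E x y \<Longrightarrow> adj V E y z \<Longrightarrow> conn V E x z"
  unfolding conn_def by (rule rtranclp.rtrancl_into_rtrancl)

lemma conn_induct [consumes 1, case_names base step]:
  assumes "conn V E x y" "P x" "\<And>y z. conn V E x y \<Longrightarrow> adj V E y z \<Longrightarrow> P y \<Longrightarrow> P z"
  shows "P y"
  using assms(1) unfolding conn_def
  by (induction rule: rtranclp_induct) (auto intro: assms(2) assms(3)[unfolded conn_def])

lemma conn_sym: "conn V E x y \<Longrightarrow> conn V E y x"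
proof (induction rule: conn_induct)
  case (step y z)
  then show ?case
    unfolding conn_def by (metis adj_sym converse_rtranclp_into_rtranclp)
qed simp

lemma conn_trans: "conn V E x y \<Longrightarrow> conn V E y z \<Longrightarrow> conn V E x z"
  unfolding conn_def by (rule rtranclp_trans)

lemma conn_edge: "x \<in> V \<Longrightarrow> y \<in> V \<Longrightarrow> {x, y} \<in> E \<Longrightarrow> conn V E x y"
  unfolding conn_def adj_def by auto

lemma conn_adj_mono:
  assumes "conn V E x y" "\<And>p q. adj V E p q \<Longrightarrow> adj V' E' p q"
  shows "conn V' E' x y"
  using assms(1) by (induction rule: conn_induct) (auto intro: conn_step assms(2))

lemma conn_mono: "conn V E x y \<Longrightarrow> V \<subseteq> V' \<Longrightarrow> E \<subseteq> E' \<Longrightarrow> conn V' E' x y"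
  by (erule conn_adj_mono) (auto simp: adj_def)

lemma conn_closed: "conn V E x y \<Longrightarrow> x \<in> S \<Longrightarrow> adj_closed V E S \<Longrightarrow> y \<in> S"
  by (induction rule: conn_induct) (auto simp: adj_closed_def)

lemma adj_closed_vertices: "adj_closed V E V"
  by (auto simp: adj_closed_def adj_def)

lemma adj_closed_component: "adj_closed V E {y. conn V E x y}"
  by (auto simp: adj_closed_def intro: conn_step)

lemma conn_in: "conn V E x y \<Longrightarrow> x \<in> V \<Longrightarrow> y \<in> V"
  using conn_closed adj_closed_vertices by metis

lemma conn_restrict:
  assumes "conn V E x y" "x \<in> S" "adj_closed V E S"
  shows "conn S E x y"
  using assms(1)
proof (induction rule: conn_induct)
  case (step y z)
  have "y \<in> S" "z \<in> S"
    using conn_closed[OF step(1) assms(2,3)] step(2) assms(3) by (auto simp: adj_closed_def)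
  with step show ?case by (auto simp: adj_def intro: conn_step)
qed simp

lemma conn_finite_edges:
  assumes "conn V E x y"
  shows "\<exists>P. finite P \<and> P \<subseteq> E \<and> conn V P x y"
  using assms
proof (induction rule: conn_induct)
  case base
  show ?case by (intro exI[of _ "{}"]) auto
next
  case (step y z)
  then obtain P where P: "finite P" "P \<subseteq> E" "conn V P x y" by blast
  have "conn V (insert {y, z} P) x y"
    using P(3) by (rule conn_mono) auto
  moreover have "adj V (insert {y, z} P) y z"
    using step(2) by (auto simp: adj_def)
  ultimately show ?case
    using P step(2) by (intro exI[of _ "insert {y, z} P"]) (auto simp: adj_def intro: conn_step)
qed

lemma conn_crossing_edge:
  assumes "conn S E a s" "\<not> Q a" "Q s"
  shows "\<exists>x y. adj S E x y \<and> \<not> Q x \<and> Q y"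
proof -
  have "Q s \<longrightarrow> (\<exists>x y. adj S E x y \<and> \<not> Q x \<and> Q y)"
    using assms(1) by (induction rule: conn_induct) (use assms(2) in blast)+
  with assms(3) show ?thesis by blast
qed

lemma graph_edge: "graph V E \<Longrightarrow> {a, b} \<in> E \<Longrightarrow> a \<noteq> b \<and> a \<in> V \<and> b \<in> V"
  unfolding graph_def by (metis doubleton_eq_iff insert_absorb2)

lemma graph_edgeE:
  assumes "graph V E" "e \<in> E"
  obtains a b where "a \<noteq> b" "a \<in> V" "b \<in> V" "e = {a, b}"
  using assms unfolding graph_def by blast

lemma Union_edges_subset:
  assumes "graph V E" "F \<subseteq> E"
  shows "\<Union>F \<subseteq> V"
proof
  fix x assume "x \<in> \<Union>F"
  then obtain e where "e \<in> E" "x \<in> e" using assms(2) by blast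
  with assms(1) show "x \<in> V" by (auto elim!: graph_edgeE)
qed

lemma finite_Union_edges:
  assumes "graph V E" "finite F" "F \<subseteq> E"
  shows "finite (\<Union>F)"
proof -
  have "\<forall>e\<in>F. finite e" using assms(1,3) unfolding graph_def by fastforce
  then show ?thesis using assms(2) by blast
qed

lemma boundary_edgeE:
  assumes "graph V E" "g \<in> boundary E C"
  obtains p q where "g = {p, q}" "g \<in> E" "p \<in> C" "q \<notin> C" "p \<in> V" "q \<in> V"
proof -
  obtain a b where ab: "g = {a, b}" "a \<in> V" "b \<in> V" "g \<in> E"
    using assms unfolding boundary_def graph_def by blast
  moreover have "(a \<in> C \<and> b \<notin> C) \<or> (b \<in> C \<and> a \<notin> C)"
    using assms(2) ab(1) by (auto simp: boundary_def)
  ultimately show ?thesis using that by (metis insert_commute)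
qed

lemma boundary_subset:
  assumes "graph V E" "adj_closed V (E - F) C" "C \<subseteq> V"
  shows "boundary E C \<subseteq> F"
proof
  fix g assume "g \<in> boundary E C"
  with assms(1) obtain p q where pq: "g = {p, q}" "g \<in> E" "p \<in> C" "q \<notin> C" "q \<in> V"
    by (rule boundary_edgeE)
  show "g \<in> F"
  proof (rule ccontr)
    assume "g \<notin> F"
    then have "adj V (E - F) p q"
      using pq assms(3) by (auto simp: adj_def)
    then show False using assms(2) pq by (auto simp: adj_closed_def)
  qed
qed

lemma adj_closed_mono: "adj_closed V E S \<Longrightarrow> E' \<subseteq> E \<Longrightarrow> adj_closed V E' S"
  by (auto simp: adj_closed_def adj_def)

lemma region_adj_closed: "region V E C \<Longrightarrow> adj_closed V (E - boundary E C) C"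
  by (auto simp: adj_closed_def adj_def boundary_def)

lemma component_region:
  assumes "graph V E" "finite F" "v \<in> V"
  shows "region V E {x. conn V (E - F) v x}" (is "region V E ?C")
proof -
  have C_V: "?C \<subseteq> V" using conn_in[OF _ assms(3)] by auto
  have from_v: "conn ?C E v z" if "z \<in> ?C" for z
  proof -
    have "conn ?C (E - F) v z"
      using conn_restrict[OF _ _ adj_closed_component, of V "E - F" v z v] that by simp
    then show ?thesis by (rule conn_mono) auto
  qed
  have "conn ?C E x y" if "x \<in> ?C" "y \<in> ?C" for x y
    using from_v[OF that(1)] from_v[OF that(2)] by (meson conn_sym conn_trans)
  moreover have "finite (boundary E ?C)"
    using boundary_subset[OF assms(1) adj_closed_component C_V] assms(2) by (rule finite_subset)
  moreover have "v \<in> ?C" by simp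
  ultimately show ?thesis
    using C_V unfolding region_def connected_graph_def by blast
qed

lemma region_whole:
  assumes "graph V E" "connected_graph V E"
  shows "region V E V"
proof -
  have "boundary E V = {}"
    using boundary_subset[OF assms(1) adj_closed_vertices[of V "E - {}"] order_refl] by simp
  then show ?thesis using assms(2) by (simp add: region_def)
qed

lemma has_tail_in_mono: "has_tail_in r A \<Longrightarrow> A \<subseteq> B \<Longrightarrow> has_tail_in r B"
  unfolding has_tail_in_def by blast

lemma has_tail_in_disjoint:
  assumes "has_tail_in r A" "has_tail_in r B"
  shows "A \<inter> B \<noteq> {}"
proof -
  obtain m n where "\<forall>i\<ge>m. r i \<in> A" "\<forall>i\<ge>n. r i \<in> B"
    using assms unfolding has_tail_in_def by blast
  then have "r (max m n) \<in> A \<inter> B" by simp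
  then show ?thesis by blast
qed

lemma ray_edge_inj:
  assumes "ray V E r"
  shows "inj (\<lambda>i. {r i, r (Suc i)})"
proof (rule injI)
  fix i j assume "{r i, r (Suc i)} = {r j, r (Suc j)}"
  moreover have "inj r" using assms by (simp add: ray_def)
  ultimately have "(r i = r j \<and> r (Suc i) = r (Suc j)) \<or> (r i = r (Suc j) \<and> r (Suc i) = r j)"
    by (simp add: doubleton_eq_iff)
  with \<open>inj r\<close> show "i = j" by (auto simp: inj_eq)
qed

lemma ray_eventually_avoids:
  assumes "ray V E r" "finite F"
  shows "\<exists>n. \<forall>i\<ge>n. {r i, r (Suc i)} \<notin> F"
proof -
  have "finite ((\<lambda>i. {r i, r (Suc i)}) -` F)"
    using finite_vimageI[OF assms(2) ray_edge_inj[OF assms(1)]] .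
  then obtain n where "\<forall>i\<in>(\<lambda>i. {r i, r (Suc i)}) -` F. i < n"
    using finite_nat_set_iff_bounded by blast
  then have "\<forall>i. {r i, r (Suc i)} \<in> F \<longrightarrow> i < n" by simp
  then show ?thesis using not_le by blast
qed

lemma ray_segment_conn:
  assumes "ray V E r" "a \<le> b" "\<And>k. a \<le> k \<Longrightarrow> k < b \<Longrightarrow> {r k, r (Suc k)} \<notin> F"
  shows "conn V (E - F) (r a) (r b)"
  using assms(2,3)
proof (induction b rule: dec_induct)
  case (step b)
  then have "adj V (E - F) (r b) (r (Suc b))"
    using assms(1) by (auto simp: ray_def adj_def)
  with step show ?case by (auto intro: conn_step)
qed simp

lemma ray_tail_conn:
  assumes "ray V E r" "\<forall>i\<ge>n. {r i, r (Suc i)} \<notin> F" "i \<ge> n" "j \<ge> n"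
  shows "conn V (E - F) (r i) (r j)"
proof -
  have "conn V (E - F) (r n) (r i)" "conn V (E - F) (r n) (r j)"
    using ray_segment_conn[OF assms(1) assms(3)] ray_segment_conn[OF assms(1) assms(4)] assms(2)
    by auto
  then show ?thesis by (meson conn_sym conn_trans)
qed

lemma ray_tail_in_closed:
  assumes "ray V E r" "finite F" "adj_closed V (E - F) S" "adj_closed V (E - F) S'"
    "V \<subseteq> S \<union> S'"
  shows "has_tail_in r S \<or> has_tail_in r S'"
proof -
  obtain n where n: "\<forall>i\<ge>n. {r i, r (Suc i)} \<notin> F"
    using ray_eventually_avoids[OF assms(1,2)] by blast
  have "r n \<in> S \<or> r n \<in> S'" using assms(1,5) by (auto simp: ray_def)
  then show ?thesis
    unfolding has_tail_in_def
    using conn_closed[OF ray_tail_conn[OF assms(1) n order_refl]] assms(3,4) by blast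
qed

lemma ray_stays_in_closed:
  assumes "ray V E r" "\<forall>i\<ge>n. {r i, r (Suc i)} \<notin> F" "adj_closed V (E - F) S" "r n \<in> S"
  shows "has_tail_in r S"
proof -
  have "r i \<in> S" if "i \<ge> n" for i
    using conn_closed[OF ray_tail_conn[OF assms(1,2) order_refl that] assms(4,3)] .
  then show ?thesis unfolding has_tail_in_def by blast
qed

lemma ray_shift_equiv:
  assumes "ray V E r"
  shows "edge_equiv V E r (\<lambda>i. r (i + n))"
  unfolding edge_equiv_def
proof (intro allI impI)
  fix F assume "finite F \<and> F \<subseteq> E"
  then obtain m where "\<forall>i\<ge>m. {r i, r (Suc i)} \<notin> F"
    using ray_eventually_avoids[OF assms] by blast
  then show "\<exists>m. \<forall>i\<ge>m. \<forall>j\<ge>m. conn V (E - F) (r i) (r (j + n))"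
    by (auto intro!: exI[of _ m] ray_tail_conn[OF assms])
qed

lemma edge_equiv_refl: "ray V E r \<Longrightarrow> edge_equiv V E r r"
  using ray_shift_equiv[of V E r 0] by simp

lemma edge_equiv_sym: "edge_equiv V E r s \<Longrightarrow> edge_equiv V E s r"
  unfolding edge_equiv_def by (meson conn_sym)

lemma edge_equiv_trans:
  assumes "edge_equiv V E r s" "edge_equiv V E s t"
  shows "edge_equiv V E r t"
  unfolding edge_equiv_def
proof (intro allI impI)
  fix F assume F: "finite F \<and> F \<subseteq> E"
  obtain n1 where n1: "\<forall>i\<ge>n1. \<forall>j\<ge>n1. conn V (E - F) (r i) (s j)"
    using assms(1) F unfolding edge_equiv_def by blast
  obtain n2 where n2: "\<forall>i\<ge>n2. \<forall>j\<ge>n2. conn V (E - F) (s i) (t j)"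
    using assms(2) F unfolding edge_equiv_def by blast
  show "\<exists>n. \<forall>i\<ge>n. \<forall>j\<ge>n. conn V (E - F) (r i) (t j)"
    by (rule exI[of _ "max n1 n2"]) (metis conn_trans max.bounded_iff n1 n2 order_refl)
qed

lemma edge_equiv_tail_in_closed:
  assumes "edge_equiv V E r s" "finite F" "F \<subseteq> E" "adj_closed V (E - F) S" "has_tail_in r S"
  shows "has_tail_in s S"
proof -
  obtain n where n: "\<forall>i\<ge>n. \<forall>j\<ge>n. conn V (E - F) (r i) (s j)"
    using assms(1-3) unfolding edge_equiv_def by blast
  obtain m where m: "\<forall>i\<ge>m. r i \<in> S"
    using assms(5) by (auto simp: has_tail_in_def)
  have "s j \<in> S" if "j \<ge> n" for j
    using conn_closed[OF n[rule_format, of "max n m" j]] m assms(4) that by simp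
  then show ?thesis by (auto simp: has_tail_in_def)
qed

lemma dominated_tail_in_closed:
  assumes "edge_dominates V E v \<omega>" "r \<in> \<omega>" "finite F" "F \<subseteq> E"
    "adj_closed V (E - F) S" "v \<in> S"
  shows "has_tail_in r S"
proof -
  obtain n where n: "\<forall>i\<ge>n. conn V (E - F) v (r i)"
    using assms(1-4) unfolding edge_dominates_def by blast
  have "r i \<in> S" if "i \<ge> n" for i
    using conn_closed[OF n[rule_format, OF that] assms(6,5)] .
  then show ?thesis unfolding has_tail_in_def by blast
qed

definition end_of :: "'v set \<Rightarrow> 'v set set \<Rightarrow> (nat \<Rightarrow> 'v) \<Rightarrow> (nat \<Rightarrow> 'v) set" where
  "end_of V E r = {s. ray V E s \<and> edge_equiv V E r s}"

lemma edge_ends_eq: "edge_ends V E = {end_of V E r | r. ray V E r}"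
  unfolding edge_ends_def end_of_def by simp

lemma end_of_in_edge_ends: "ray V E r \<Longrightarrow> end_of V E r \<in> edge_ends V E"
  unfolding edge_ends_eq by blast

lemma end_of_self: "ray V E r \<Longrightarrow> r \<in> end_of V E r"
  unfolding end_of_def by (simp add: edge_equiv_refl)

lemma edge_endsE:
  assumes "\<omega> \<in> edge_ends V E"
  obtains r where "ray V E r" "\<omega> = end_of V E r"
  using assms unfolding edge_ends_eq by blast

lemma edge_end_ray: "\<omega> \<in> edge_ends V E \<Longrightarrow> r \<in> \<omega> \<Longrightarrow> ray V E r"
  by (auto elim!: edge_endsE simp: end_of_def)

lemma edge_end_equiv: "\<omega> \<in> edge_ends V E \<Longrightarrow> r \<in> \<omega> \<Longrightarrow> s \<in> \<omega> \<Longrightarrow> edge_equiv V E r s"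
  by (auto elim!: edge_endsE simp: end_of_def) (meson edge_equiv_sym edge_equiv_trans)

lemma edge_end_nonempty:
  assumes "\<omega> \<in> edge_ends V E"
  obtains r where "r \<in> \<omega>"
  using assms by (auto elim!: edge_endsE intro: end_of_self)

lemma edge_end_eq_end_of: "\<omega> \<in> edge_ends V E \<Longrightarrow> r \<in> \<omega> \<Longrightarrow> \<omega> = end_of V E r"
  apply (erule edge_endsE)
  apply (auto simp: end_of_def intro: edge_equiv_trans edge_equiv_sym)
  done

lemma edge_end_member:
  "\<omega> \<in> edge_ends V E \<Longrightarrow> r \<in> \<omega> \<Longrightarrow> ray V E s \<Longrightarrow> edge_equiv V E r s \<Longrightarrow> s \<in> \<omega>"
  using edge_end_eq_end_of[of \<omega> V E r] by (auto simp: end_of_def)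

lemma edge_ends_eqI:
  assumes "\<omega> \<in> edge_ends V E" "\<omega>' \<in> edge_ends V E" "r \<in> \<omega>" "s \<in> \<omega>'" "edge_equiv V E r s"
  shows "\<omega> = \<omega>'"
  using assms by (metis edge_end_eq_end_of edge_end_member edge_end_ray)

lemma ray_shift:
  assumes "ray V E r"
  shows "ray V E (\<lambda>i. r (i + n))"
proof -
  have "inj (\<lambda>i. r (i + n))" using assms unfolding ray_def inj_def by force
  then show ?thesis using assms unfolding ray_def by simp
qed

lemma region_endsI:
  assumes "\<omega> \<in> edge_ends V E" "r \<in> \<omega>" "has_tail_in r C"
  shows "\<omega> \<in> region_ends V E C"
proof -
  obtain n where n: "\<forall>i\<ge>n. r i \<in> C" using assms(3) by (auto simp: has_tail_in_def)
  have "ray V E r" using assms(1,2) by (rule edge_end_ray)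
  then have "(\<lambda>i. r (i + n)) \<in> \<omega>"
    by (intro edge_end_member[OF assms(1,2)] ray_shift ray_shift_equiv)
  moreover have "\<forall>i. r (i + n) \<in> C" using n by simp
  ultimately show ?thesis using assms(1) unfolding region_ends_def by force
qed

lemma region_ends_all: "region_ends V E V = edge_ends V E"
proof
  show "region_ends V E V \<subseteq> edge_ends V E" by (auto simp: region_ends_def)
  show "edge_ends V E \<subseteq> region_ends V E V"
  proof
    fix \<omega> assume \<omega>: "\<omega> \<in> edge_ends V E"
    obtain r where r: "r \<in> \<omega>" using \<omega> by (rule edge_end_nonempty)
    have "ray V E r" using \<omega> r by (rule edge_end_ray)
    then have "\<forall>i. r i \<in> V" by (simp add: ray_def)
    with \<omega> r show "\<omega> \<in> region_ends V E V" unfolding region_ends_def by blast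
  qed
qed

lemma edge_ends_eq_if_dominated:
  assumes "\<omega> \<in> edge_ends V E" "\<omega>' \<in> edge_ends V E"
    and "edge_dominates V E v \<omega>" "edge_dominates V E v \<omega>'"
  shows "\<omega> = \<omega>'"
proof -
  obtain r where r: "r \<in> \<omega>" using assms(1) by (rule edge_end_nonempty)
  obtain r' where r': "r' \<in> \<omega>'" using assms(2) by (rule edge_end_nonempty)
  have "edge_equiv V E r r'"
    unfolding edge_equiv_def
  proof (intro allI impI)
    fix F assume F: "finite F \<and> F \<subseteq> E"
    obtain n where n: "\<forall>i\<ge>n. conn V (E - F) v (r i)"
      using assms(3) F r unfolding edge_dominates_def by blast
    obtain n' where n': "\<forall>i\<ge>n'. conn V (E - F) v (r' i)"
      using assms(4) F r' unfolding edge_dominates_def by blast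
    have "conn V (E - F) (r i) (r' j)" if "i \<ge> max n n'" "j \<ge> max n n'" for i j
      using n n' that by (meson conn_sym conn_trans max.boundedE)
    then show "\<exists>m. \<forall>i\<ge>m. \<forall>j\<ge>m. conn V (E - F) (r i) (r' j)" by blast
  qed
  then show ?thesis using edge_ends_eqI[OF assms(1,2) r r'] by blast
qed

lemma dominated_region_ends:
  assumes "region V E C" "\<omega> \<in> edge_ends V E" "edge_dominates V E x \<omega>" "x \<in> C"
  shows "\<omega> \<in> region_ends V E C"
proof -
  obtain r where r: "r \<in> \<omega>" using assms(2) by (rule edge_end_nonempty)
  have "finite (boundary E C)" "boundary E C \<subseteq> E"
    using assms(1) by (auto simp: region_def boundary_def)
  then have "has_tail_in r C"
    using dominated_tail_in_closed[OF assms(3) r _ _ region_adj_closed[OF assms(1)] assms(4)] by blast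
  then show ?thesis by (rule region_endsI[OF assms(2) r])
qed

lemma dominating_vertex_in_region:
  assumes "region V E C" "\<omega> \<in> region_ends V E C" "edge_dominates V E x \<omega>"
  shows "x \<in> C"
proof -
  obtain r where r: "r \<in> \<omega>" "\<forall>i. r i \<in> C" using assms(2) by (auto simp: region_ends_def)
  have "finite (boundary E C) \<and> boundary E C \<subseteq> E"
    using assms(1) by (auto simp: region_def boundary_def)
  then obtain n where "conn V (E - boundary E C) x (r n)"
    using assms(3) r(1) unfolding edge_dominates_def by blast
  then have "conn V (E - boundary E C) (r n) x" by (rule conn_sym)
  from conn_closed[OF this _ region_adj_closed[OF assms(1)]] r(2) show ?thesis by blast
qed

section \<open>Embeddings into spaces with a given basis\<close>

lemma openin_image_generated_by:
  assumes "inj_on f A" "generate_topology_on B T"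
    and "\<And>C. C \<in> B \<Longrightarrow> openin Y (f ` (C \<inter> A))"
  shows "openin Y (f ` (T \<inter> A))"
  using assms(2)
proof (induction rule: generate_topology_on.induct)
  case (Int a b)
  have "f ` (a \<inter> b \<inter> A) = f ` (a \<inter> A) \<inter> f ` (b \<inter> A)"
    using assms(1) unfolding inj_on_def by blast
  with Int show ?case by (simp add: openin_Int)
next
  case (UN K)
  have "f ` (\<Union>K \<inter> A) = (\<Union>k\<in>K. f ` (k \<inter> A))" by auto
  with UN show ?case by (auto intro: openin_Union)
qed (use assms(3) in auto)

lemma continuous_map_generated_by:
  assumes cover: "A \<subseteq> \<Union>B1" and into: "f ` A \<subseteq> \<Union>B2"
    and cont: "\<And>x U. x \<in> A \<Longrightarrow> U \<in> B2 \<Longrightarrow> f x \<in> U \<Longrightarrow>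
      \<exists>C\<in>B1. x \<in> C \<and> (\<forall>x'\<in>A \<inter> C. f x' \<in> U)"
  shows "continuous_map (subtopology (topology_generated_by B1) A) (topology_generated_by B2) f"
proof -
  define X where "X = subtopology (topology_generated_by B1) A"
  have topX: "topspace X = A" using cover by (auto simp: X_def)
  have "openin X (f -` U \<inter> topspace X)" if U: "U \<in> B2" for U
  proof (subst openin_subopen, intro ballI)
    fix x assume x: "x \<in> f -` U \<inter> topspace X"
    then obtain C where C: "C \<in> B1" "x \<in> C" "\<forall>x'\<in>A \<inter> C. f x' \<in> U"
      using cont U topX by blast
    have "openin X (C \<inter> A)"
      unfolding X_def openin_subtopology using C(1) topology_generated_by_Basis by blast
    with C x topX show "\<exists>T. openin X T \<and> x \<in> T \<and> T \<subseteq> f -` U \<inter> topspace X"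
      by (intro exI[of _ "C \<inter> A"]) auto
  qed
  then show ?thesis
    unfolding X_def[symmetric] using into topX by (intro continuous_on_generated_topo) simp_all
qed

lemma embedding_map_generated_by:
  assumes cover: "A \<subseteq> \<Union>B1" and into: "f ` A \<subseteq> Z" "f ` A \<subseteq> \<Union>B2"
    and inj: "inj_on f A"
    and cont: "\<And>x U. x \<in> A \<Longrightarrow> U \<in> B2 \<Longrightarrow> f x \<in> U \<Longrightarrow>
      \<exists>C\<in>B1. x \<in> C \<and> (\<forall>x'\<in>A \<inter> C. f x' \<in> U)"
    and opn: "\<And>x C. x \<in> A \<Longrightarrow> C \<in> B1 \<Longrightarrow> x \<in> C \<Longrightarrow>
      \<exists>U\<in>B2. f x \<in> U \<and> (\<forall>x'\<in>A. f x' \<in> U \<longrightarrow> x' \<in> C)"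
  shows "embedding_map (subtopology (topology_generated_by B1) A)
           (subtopology (topology_generated_by B2) Z) f"
proof -
  define X where "X = subtopology (topology_generated_by B1) A"
  define Y where "Y = subtopology (subtopology (topology_generated_by B2) Z) (f ` A)"
  have topX: "topspace X = A" using cover by (auto simp: X_def)
  have topY: "topspace Y = f ` A" using into by (auto simp: Y_def)
  have "continuous_map X Y f"
    using continuous_map_generated_by[OF cover into(2) cont] into topX
    unfolding X_def Y_def continuous_map_in_subtopology by auto
  moreover have "openin Y (f ` (C \<inter> A))" if C: "C \<in> B1" for C
  proof (subst openin_subopen, intro ballI)
    fix y assume "y \<in> f ` (C \<inter> A)"
    then obtain x where x: "x \<in> C" "x \<in> A" "y = f x" by blast
    then obtain U where U: "U \<in> B2" "f x \<in> U" "\<forall>x'\<in>A. f x' \<in> U \<longrightarrow> x' \<in> C"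
      using opn C by blast
    have "openin (subtopology (topology_generated_by B2) Z) (U \<inter> Z)"
      unfolding openin_subtopology using U(1) topology_generated_by_Basis by blast
    then have "openin Y (U \<inter> Z \<inter> f ` A)"
      unfolding Y_def openin_subtopology[of "subtopology _ Z"] by blast
    moreover have "U \<inter> Z \<inter> f ` A \<subseteq> f ` (C \<inter> A)" using U by auto
    ultimately show "\<exists>T. openin Y T \<and> y \<in> T \<and> T \<subseteq> f ` (C \<inter> A)"
      using x U into by blast
  qed
  then have "open_map X Y f"
    unfolding open_map_def X_def openin_subtopology openin_topology_generated_by_iff
    using openin_image_generated_by[OF inj] by blast
  ultimately have "homeomorphic_map X Y f"
    using topX topY inj by (intro bijective_open_imp_homeomorphic_map) simp_all
  then show ?thesis using cover by (simp add: embedding_map_def X_def Y_def Int_absorb1)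
qed

section \<open>Rays through nested connected sets\<close>

lemma loop_erasure_indices:
  assumes finite_visits: "\<And>x. finite {i. w i = x}"
  obtains idx where "strict_mono idx" "\<And>n. w (idx (Suc n)) = w (Suc (idx n))"
    and "\<And>n j. w j = w (idx n) \<Longrightarrow> j \<le> idx n"
proof -
  define last_visit where "last_visit x = Max {i. w i = x}" for x
  have last_ge: "j \<le> last_visit x" if "w j = x" for j x
    unfolding last_visit_def using finite_visits that by (simp add: Max_ge)
  have last_at: "w (last_visit (w i)) = w i" for i
    unfolding last_visit_def using finite_visits Max_in[of "{j. w j = w i}"] by auto
  text \<open>From the last visit of each vertex, continue with the next step of the walk.\<close>
  define idx where "idx n = ((\<lambda>k. last_visit (w (Suc k))) ^^ n) (last_visit (w 0))" for n
  have idx_Suc: "idx (Suc n) = last_visit (w (Suc (idx n)))" for n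
    by (simp add: idx_def)
  have idx_last: "idx n = last_visit (w (idx n))" for n
    by (cases n) (simp_all add: idx_def last_at)
  have "idx n < idx (Suc n)" for n
    using last_ge[of "Suc (idx n)"] idx_Suc[of n] by simp
  then have "strict_mono idx" by (rule strict_monoI_Suc)
  moreover have "w (idx (Suc n)) = w (Suc (idx n))" for n
    by (simp add: idx_Suc last_at)
  moreover have "j \<le> idx n" if "w j = w (idx n)" for n j
    using last_ge[OF that] idx_last[of n] by simp
  ultimately show ?thesis by (rule that)
qed

lemma walk_contains_ray:
  assumes step: "\<And>i. w i = w (Suc i) \<or> adj V E (w i) (w (Suc i))"
    and finite_visits: "\<And>x. finite {i. w i = x}"
  shows "\<exists>r. ray V E r \<and> (\<forall>S. has_tail_in w S \<longrightarrow> has_tail_in r S)"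
proof -
  obtain idx where mono: "strict_mono idx" and next_step: "\<And>n. w (idx (Suc n)) = w (Suc (idx n))"
    and last: "\<And>n j. w j = w (idx n) \<Longrightarrow> j \<le> idx n"
    using loop_erasure_indices[OF finite_visits] by blast
  define r where "r n = w (idx n)" for n
  have "adj V E (r n) (r (Suc n))" for n
  proof -
    have "w (Suc (idx n)) \<noteq> w (idx n)" using last[of "Suc (idx n)" n] by auto
    then show ?thesis using step[of "idx n"] by (simp add: r_def next_step)
  qed
  moreover have "inj r"
  proof (rule injI)
    fix i j assume "r i = r j"
    then have "idx i = idx j" using last[of "idx i" j] last[of "idx j" i] by (simp add: r_def)
    then show "i = j" using strict_mono_eq[OF mono] by simp
  qed
  ultimately have "ray V E r" by (simp add: ray_def adj_def)
  moreover have "has_tail_in r S" if "has_tail_in w S" for S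
    using that strict_mono_imp_increasing[OF mono]
    unfolding has_tail_in_def r_def by (meson order_trans)
  ultimately show ?thesis by blast
qed

lemma concat_upt_append:
  "k \<le> k' \<Longrightarrow> concat (map f [0..<k']) = concat (map f [0..<k]) @ concat (map f [k..<k'])"
  by (induction k' rule: dec_induct) simp_all

lemma length_concat_upt_ge:
  assumes "\<And>j. f j \<noteq> []"
  shows "k \<le> length (concat (map f [0..<k]))"
proof (induction k)
  case (Suc k)
  have "1 \<le> length (f k)" using assms[of k] by (simp add: Suc_le_eq)
  with Suc.IH show ?case by simp
qed simp

lemma nth_concat_upt_mono:
  assumes "k \<le> k'" "i < length (concat (map f [0..<k]))"
  shows "concat (map f [0..<k']) ! i = concat (map f [0..<k]) ! i"
  using concat_upt_append[OF assms(1), of f] assms(2) by (simp add: nth_append)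

lemma nth_concat_upt_late:
  assumes "k \<le> k'" "length (concat (map f [0..<k])) \<le> i" "i < length (concat (map f [0..<k']))"
  shows "\<exists>j\<ge>k. concat (map f [0..<k']) ! i \<in> set (f j)"
proof -
  let ?C = "concat (map f [k..<k'])"
  have "concat (map f [0..<k']) ! i = ?C ! (i - length (concat (map f [0..<k])))"
    using concat_upt_append[OF assms(1), of f] assms(2) by (simp add: nth_append)
  moreover have "i - length (concat (map f [0..<k])) < length ?C"
    using concat_upt_append[OF assms(1), of f] assms(2,3) by simp
  ultimately have "concat (map f [0..<k']) ! i \<in> set ?C" using nth_mem by metis
  then show ?thesis by auto
qed

lemma segments_walk:
  assumes path: "\<And>k. rtrancl_path R (z k) (P k) (z (Suc k))" and refl: "\<And>x. R x x"
  shows "\<exists>w. (\<forall>i. R (w i) (w (Suc i))) \<and> (\<forall>k. \<exists>n. \<forall>i\<ge>n. \<exists>j\<ge>k. w i \<in> set (z j # P j))"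
proof -
  text \<open>The walk runs through the segments \<open>z k # P k\<close>; repeating \<open>z k\<close> at the start of
    each segment makes every segment nonempty.\<close>
  define seg where "seg k = z k # P k" for k
  define L where "L k = concat (map seg [0..<k])" for k
  have L_Suc: "L (Suc k) = L k @ seg k" for k by (simp add: L_def)
  have L_length: "k \<le> length (L k)" for k
    unfolding L_def by (rule length_concat_upt_ge) (simp add: seg_def)
  have L_path: "rtrancl_path R (z 0) (tl (L (Suc k))) (z (Suc k))" for k
  proof (induction k)
    case 0
    show ?case using path[of 0] by (simp add: L_def seg_def)
  next
    case (Suc k)
    have "L (Suc k) \<noteq> []" by (simp add: L_def seg_def)
    then have "tl (L (Suc (Suc k))) = tl (L (Suc k)) @ seg (Suc k)"
      unfolding L_Suc[of "Suc k"] by (rule tl_append2)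
    moreover have "rtrancl_path R (z (Suc k)) (seg (Suc k)) (z (Suc (Suc k)))"
      using path[of "Suc k"] refl by (simp add: seg_def rtrancl_path.step)
    ultimately show ?case using rtrancl_path_trans[OF Suc.IH] by simp
  qed
  define w where "w i = L (Suc i) ! i" for i
  have w_L: "w i = L k ! i" if "i < length (L k)" for i k
    using nth_concat_upt_mono[of k "max k (Suc i)" i seg] that
      nth_concat_upt_mono[of "Suc i" "max k (Suc i)" i seg] L_length[of "Suc i"]
    by (simp add: w_def L_def)
  have "R (w i) (w (Suc i))" for i
  proof -
    have L_hd: "L (Suc (Suc i)) = z 0 # tl (L (Suc (Suc i)))"
      by (simp add: L_def seg_def del: upt_Suc add: upt_conv_Cons)
    have "i < length (tl (L (Suc (Suc i))))" using L_length[of "Suc (Suc i)"] by simp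
    from rtrancl_path_nth[OF L_path this] show ?thesis
      using L_length[of "Suc (Suc i)"] w_L[of i "Suc (Suc i)"] w_L[of "Suc i" "Suc (Suc i)"]
      by (subst (asm) L_hd[symmetric]) (simp add: nth_tl)
  qed
  moreover have "\<exists>j\<ge>k. w i \<in> set (seg j)" if i: "length (L k) \<le> i" for i k
  proof -
    have "k \<le> Suc i" using L_length[of k] i by simp
    then show ?thesis
      using nth_concat_upt_late[of k "Suc i" seg i] i L_length[of "Suc i"]
      by (auto simp: w_def L_def)
  qed
  ultimately show ?thesis unfolding seg_def by blast
qed

lemma nested_sets_walk:
  fixes W :: "nat \<Rightarrow> 'v set"
  assumes decr: "\<And>k. W (Suc k) \<subseteq> W k"
    and connected: "\<And>k x y. x \<in> W k \<Longrightarrow> y \<in> W k \<Longrightarrow> conn (W k) E x y"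
    and nonempty: "\<And>k. W k \<noteq> {}" and "W 0 \<subseteq> V"
  shows "\<exists>w. (\<forall>i. w i = w (Suc i) \<or> adj V E (w i) (w (Suc i))) \<and> (\<forall>k. has_tail_in w (W k))"
proof -
  have antimono: "W k' \<subseteq> W k" if "k \<le> k'" for k k'
    using lift_Suc_antimono_le[of W, OF decr that] .
  define z where "z k = (SOME x. x \<in> W k)" for k
  have z: "z k \<in> W k" for k
    unfolding z_def using nonempty by (simp add: some_in_eq)
  have "\<exists>P. rtrancl_path (adj (W k) E) (z k) P (z (Suc k))" for k
    using connected[of "z k" k "z (Suc k)"] z decr
    unfolding conn_def rtranclp_eq_rtrancl_path by blast
  then obtain P where P: "\<And>k. rtrancl_path (adj (W k) E) (z k) (P k) (z (Suc k))"
    by metis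
  have seg_in: "set (z k # P k) \<subseteq> W k" for k
  proof -
    have "x \<in> W k" if x: "x \<in> set (P k)" for x
      using rtrancl_path_Range[OF P x] by (auto simp: adj_def elim: RangepE)
    then show ?thesis using z by auto
  qed
  define R where "R a b \<longleftrightarrow> a = b \<or> adj V E a b" for a b
  have "rtrancl_path R (z k) (P k) (z (Suc k))" for k
    by (rule rtrancl_path_mono[OF P[of k]])
      (use antimono[of 0 k] \<open>W 0 \<subseteq> V\<close> in \<open>auto simp: R_def adj_def\<close>)
  then obtain w where step: "\<And>i. R (w i) (w (Suc i))"
    and late: "\<And>k. \<exists>n. \<forall>i\<ge>n. \<exists>j\<ge>k. w i \<in> set (z j # P j)"
    using segments_walk[of R z P] by (auto simp: R_def)
  have "has_tail_in w (W k)" for k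
    using late[of k] seg_in antimono unfolding has_tail_in_def by blast
  then show ?thesis using step unfolding R_def by blast
qed

lemma nested_sets_ray:
  fixes W :: "nat \<Rightarrow> 'v set"
  assumes "\<And>k. W (Suc k) \<subseteq> W k"
    and "\<And>k x y. x \<in> W k \<Longrightarrow> y \<in> W k \<Longrightarrow> conn (W k) E x y"
    and "\<And>k. W k \<noteq> {}" and "W 0 \<subseteq> V"
    and vanish: "\<And>x. \<exists>k. x \<notin> W k"
  shows "\<exists>r. ray V E r \<and> (\<forall>k. has_tail_in r (W k))"
proof -
  obtain w where step: "\<And>i. w i = w (Suc i) \<or> adj V E (w i) (w (Suc i))"
    and tails: "\<And>k. has_tail_in w (W k)"
    using nested_sets_walk[OF assms(1-4)] by blast
  have "finite {i. w i = x}" for x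
  proof -
    obtain k where "x \<notin> W k" using vanish by blast
    moreover obtain n where "\<forall>i\<ge>n. w i \<in> W k" using tails by (auto simp: has_tail_in_def)
    ultimately have "{i. w i = x} \<subseteq> {..<n}" by (auto simp: not_less[symmetric])
    then show ?thesis by (rule finite_subset) simp
  qed
  then obtain r where "ray V E r" "\<forall>S. has_tail_in w S \<longrightarrow> has_tail_in r S"
    using walk_contains_ray[of w V E] step by blast
  then show ?thesis using tails by blast
qed

locale edge_block_decomp =
  fixes V :: "'v set" and E :: "'v set set" and N :: "'n set" and ET :: "'n set set"
    and X :: "'n \<Rightarrow> 'v set"
  assumes graph: "graph V E" and connected: "connected_graph V E"
    and decomp: "tree_cut_decomp V E N ET X"
    and finite_adh: "finite_adhesion E N ET X"
    and parts_are_blocks: "X ` N = edge_blocks V E"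
    and adjacent_parts_linked: "\<forall>t1 t2. {t1, t2} \<in> ET \<longrightarrow> (\<exists>x\<in>X t1. \<exists>y\<in>X t2. {x, y} \<in> E)"
begin

abbreviation side :: "'n set \<Rightarrow> 'n \<Rightarrow> 'n set" where
  "side e u \<equiv> tside N ET e u"

abbreviation parts :: "'n set \<Rightarrow> 'v set" where
  "parts S \<equiv> \<Union> (X ` S)"

abbreviation orient :: "(nat \<Rightarrow> 'v) set \<Rightarrow> 'n set \<Rightarrow> 'n \<Rightarrow> bool" where
  "orient \<omega> e u \<equiv> oriented_towards N ET X \<omega> e u"

abbreviation end_in_side :: "(nat \<Rightarrow> 'n) set \<Rightarrow> 'n set \<Rightarrow> 'n \<Rightarrow> bool" where
  "end_in_side \<eta> e u \<equiv> \<forall>q\<in>\<eta>. has_tail_in q (side e u)"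

abbreviation tedge :: "(nat \<Rightarrow> 'n) \<Rightarrow> nat \<Rightarrow> 'n set" where
  "tedge q i \<equiv> {q i, q (Suc i)}"

lemma tree: "tree N ET"
  using decomp by (simp add: tree_cut_decomp_def)

lemma tree_graph: "graph N ET"
  using tree by (simp add: tree_def)

lemma tree_edge: "{a, b} \<in> ET \<Longrightarrow> a \<noteq> b \<and> a \<in> N \<and> b \<in> N"
  using tree_graph by (rule graph_edge)

lemma tree_conn: "a \<in> N \<Longrightarrow> b \<in> N \<Longrightarrow> conn N ET a b"
  using tree by (simp add: tree_def connected_graph_def)

lemma tree_edgeE:
  assumes "e \<in> ET" "u \<in> e"
  obtains u' where "u' \<noteq> u" "e = {u, u'}" "u \<in> N" "u' \<in> N"
proof -
  obtain a b where "a \<noteq> b" "a \<in> N" "b \<in> N" "e = {a, b}"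
    using tree_graph assms(1) by (rule graph_edgeE)
  moreover from this(4) assms(2) have "u = a \<or> u = b" by auto
  ultimately show ?thesis
    by (metis that insert_commute)
qed

lemma tree_edge_eq:
  assumes "e \<in> ET" "u \<in> e" "u' \<in> e" "u \<noteq> u'"
  shows "e = {u, u'}"
proof -
  obtain u'' where "e = {u, u''}" using assms(1,2) by (rule tree_edgeE)
  with assms(3,4) show ?thesis by auto
qed

lemma side_subset: "side e u \<subseteq> N"
  by (auto simp: tside_def)

lemma side_self: "u \<in> N \<Longrightarrow> u \<in> side e u"
  by (simp add: tside_def)

lemma side_adj_closed: "adj_closed N (ET - {e}) (side e u)"
  by (auto simp: adj_closed_def tside_def adj_def intro: conn_step)

lemma side_trans:
  assumes "s \<in> side e u" "conn N (ET - {e}) s s'"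
  shows "s' \<in> side e u"
  using conn_closed[OF assms(2,1) side_adj_closed] .

lemma sides_disjoint:
  assumes "e \<in> ET" "u \<in> e" "u' \<in> e" "u \<noteq> u'"
  shows "side e u \<inter> side e u' = {}"
proof (rule ccontr)
  assume "side e u \<inter> side e u' \<noteq> {}"
  then obtain s where "conn N (ET - {e}) u s" "conn N (ET - {e}) u' s"
    by (auto simp: tside_def)
  then have "conn N (ET - {e}) u u'" by (meson conn_sym conn_trans)
  moreover have "e = {u, u'}" using assms by (rule tree_edge_eq)
  ultimately show False using tree assms(1) by (auto simp: tree_def)
qed

lemma sides_cover:
  assumes "e \<in> ET" "u \<in> e" "u' \<in> e" "u \<noteq> u'" "s \<in> N"
  shows "s \<in> side e u \<or> s \<in> side e u'"
proof -
  have e: "e = {u, u'}" using assms(1-4) by (rule tree_edge_eq)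
  have "u \<in> N" using assms(1,2) by (rule tree_edgeE)
  then have "conn N ET u s" using assms(5) by (rule tree_conn)
  then have "conn N (ET - {e}) u s \<or> conn N (ET - {e}) u' s"
  proof (induction rule: conn_induct)
    case (step y z)
    show ?case
    proof (cases "{y, z} = e")
      case True
      then have "z = u \<or> z = u'" by (auto simp: e doubleton_eq_iff)
      then show ?thesis by auto
    next
      case False
      then have "adj N (ET - {e}) y z" using step(2) by (auto simp: adj_def)
      with step(3) show ?thesis by (meson conn_step)
    qed
  qed simp
  then show ?thesis using assms(5) by (auto simp: tside_def)
qed

lemma tree_edge_other_side: "{a, b} \<in> ET \<Longrightarrow> a \<notin> side {a, b} b"
  using sides_disjoint[of "{a, b}" a b] tree_edge side_self by blast

lemma side_edge_same:
  assumes "{x, y} \<in> ET" "{x, y} \<noteq> e" "x \<in> side e u"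
  shows "y \<in> side e u"
proof -
  have "adj N (ET - {e}) x y" using assms tree_edge[OF assms(1)] by (auto simp: adj_def)
  then show ?thesis using assms(3) side_adj_closed by (auto simp: adj_closed_def)
qed

lemma side_conn:
  assumes "s \<in> side e u"
  shows "conn (side e u) ET u s"
proof -
  have "conn N (ET - {e}) u s" using assms by (simp add: tside_def)
  moreover from this have "u \<in> side e u"
    using assms conn_in[OF conn_sym] by (auto simp: tside_def)
  ultimately have "conn (side e u) (ET - {e}) u s"
    using side_adj_closed by (rule conn_restrict)
  then show ?thesis by (rule conn_mono) auto
qed

lemma conn_stays_side:
  assumes "conn S ET c s" "f \<in> ET" "\<not> f \<subseteq> S" "c \<in> side f u"
  shows "s \<in> side f u"
proof -
  have "conn N (ET - {f}) c s"
    using assms(1) by (rule conn_adj_mono) (use assms(3) tree_edge in \<open>auto simp: adj_def\<close>)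
  with assms(4) show ?thesis by (rule side_trans)
qed

lemma side_within_side:
  assumes "f \<in> ET" "\<not> f \<subseteq> side e u" "u \<in> side f w"
  shows "side e u \<subseteq> side f w"
proof
  fix s assume "s \<in> side e u"
  then show "s \<in> side f w" using conn_stays_side[OF side_conn assms] by blast
qed

lemma branches_disjoint:
  assumes "{t, t'} \<in> ET" "{t, t''} \<in> ET" "t' \<noteq> t''"
  shows "side {t, t'} t' \<inter> side {t, t''} t'' = {}"
proof -
  have t: "t \<in> N" "t \<noteq> t''" using tree_edge[OF assms(2)] by auto
  have "t \<notin> side {t, t''} t''"
    using sides_disjoint[OF assms(2), of t t''] side_self[OF t(1)] t(2) by blast
  moreover have "t'' \<in> side {t, t'} t"
    by (rule side_edge_same[OF assms(2) _ side_self[OF t(1)]])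
      (use assms(3) in \<open>auto simp: doubleton_eq_iff\<close>)
  ultimately have "side {t, t''} t'' \<subseteq> side {t, t'} t"
    using assms(1) by (intro side_within_side) auto
  moreover have "side {t, t'} t \<inter> side {t, t'} t' = {}"
    using assms(1) tree_edge[OF assms(1)] by (intro sides_disjoint) auto
  ultimately show ?thesis by blast
qed

lemma side_region:
  assumes "e \<in> ET" "u \<in> e"
  shows "region N ET (side e u)"
proof -
  have "u \<in> N" using assms by (rule tree_edgeE)
  have "conn (side e u) ET x y" if "x \<in> side e u" "y \<in> side e u" for x y
    using side_conn[OF that(1)] side_conn[OF that(2)] by (meson conn_sym conn_trans)
  moreover have "finite (boundary ET (side e u))"
    using boundary_subset[OF tree_graph side_adj_closed side_subset] by (rule finite_subset) simp
  ultimately show ?thesis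
    using side_self[OF \<open>u \<in> N\<close>] side_subset unfolding region_def connected_graph_def by blast
qed

lemma tree_step_towards:
  assumes "t \<in> N" "s \<in> N" "t \<noteq> s"
  shows "\<exists>t'. {t, t'} \<in> ET \<and> s \<in> side {t, t'} t'"
proof -
  have "conn N ET t s" using tree_conn assms by blast
  then have "s = t \<or> (\<exists>t'. {t, t'} \<in> ET \<and> s \<in> side {t, t'} t')"
  proof (induction rule: conn_induct)
    case (step z y)
    have zy: "{z, y} \<in> ET" "z \<in> N" "y \<in> N" using step(2) by (auto simp: adj_def)
    from step(3) show ?case
    proof
      assume "z = t"
      then show ?thesis using zy side_self by auto
    next
      assume "\<exists>t'. {t, t'} \<in> ET \<and> z \<in> side {t, t'} t'"
      then obtain t' where t': "{t, t'} \<in> ET" "z \<in> side {t, t'} t'" by blast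
      show ?thesis
      proof (cases "{z, y} = {t, t'}")
        case True
        have "t \<noteq> t'" using tree_edge[OF t'(1)] by blast
        then have "t \<notin> side {t, t'} t'"
          using sides_disjoint[OF t'(1), of t t'] side_self assms(1) by blast
        then have "z \<noteq> t" using t'(2) by blast
        then have "y = t" using True by (auto simp: doubleton_eq_iff)
        then show ?thesis by simp
      next
        case False
        then show ?thesis using side_edge_same[OF zy(1) False t'(2)] t'(1) by blast
      qed
    qed
  qed simp
  then show ?thesis using assms(3) by blast
qed

lemma leaving_edge:
  assumes "x0 \<in> D" "x0 \<in> N" "w \<in> N"
  shows "w \<in> D \<or> (\<exists>c d. {c, d} \<in> ET \<and> c \<in> D \<and> d \<notin> D \<and> w \<in> side {c, d} d)"
proof -
  have "conn N ET x0 w" using tree_conn assms by blast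
  then show ?thesis
  proof (induction rule: conn_induct)
    case (step z y)
    have zy: "{z, y} \<in> ET" "z \<in> N" "y \<in> N" using step(2) by (auto simp: adj_def)
    show ?case
    proof (cases "y \<in> D")
      case False
      from step(3) show ?thesis
      proof
        assume "z \<in> D"
        then show ?thesis using zy False side_self by blast
      next
        assume "\<exists>c d. {c, d} \<in> ET \<and> c \<in> D \<and> d \<notin> D \<and> z \<in> side {c, d} d"
        then obtain c d where cd: "{c, d} \<in> ET" "c \<in> D" "d \<notin> D" "z \<in> side {c, d} d"
          by blast
        show ?thesis
        proof (cases "{z, y} = {c, d}")
          case True
          then have "y = d" using False cd(2) by (auto simp: doubleton_eq_iff)
          then show ?thesis using cd side_self tree_edge by blast
        next
          case False
          then show ?thesis using side_edge_same[OF zy(1) False cd(4)] cd by blast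
        qed
      qed
    qed simp
  qed (use assms(1) in simp)
qed

lemma tree_ray_edge: "ray N ET q \<Longrightarrow> tedge q i \<in> ET"
  by (simp add: ray_def)

lemma tree_ray_node: "ray N ET q \<Longrightarrow> q i \<in> N"
  by (simp add: ray_def)

lemma tree_ray_edge_ends_distinct: "ray N ET q \<Longrightarrow> q i \<noteq> q (Suc i)"
  using tree_edge tree_ray_edge by blast

lemma tree_ray_sides_disjoint:
  "ray N ET q \<Longrightarrow> side (tedge q i) (q i) \<inter> side (tedge q i) (q (Suc i)) = {}"
  by (rule sides_disjoint) (simp_all add: tree_ray_edge tree_ray_edge_ends_distinct)

lemma tree_ray_before:
  assumes "ray N ET q" "j \<le> i"
  shows "q j \<in> side (tedge q i) (q i)"
proof -
  have "conn N (ET - {tedge q i}) (q j) (q i)"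
  proof (rule ray_segment_conn[OF assms])
    fix k assume "j \<le> k" "k < i"
    then show "tedge q k \<notin> {tedge q i}"
      using injD[OF ray_edge_inj[OF assms(1)], of k i] by auto
  qed
  then show ?thesis using tree_ray_node[OF assms(1)] by (simp add: tside_def conn_sym)
qed

lemma tree_ray_after:
  assumes "ray N ET q" "i < j"
  shows "q j \<in> side (tedge q i) (q (Suc i))"
proof -
  have "conn N (ET - {tedge q i}) (q (Suc i)) (q j)"
  proof (rule ray_segment_conn[OF assms(1)])
    show "Suc i \<le> j" using assms(2) by simp
    fix k assume "Suc i \<le> k" "k < j"
    then show "tedge q k \<notin> {tedge q i}"
      using injD[OF ray_edge_inj[OF assms(1)], of k i] by auto
  qed
  then show ?thesis using tree_ray_node[OF assms(1)] by (simp add: tside_def)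
qed

lemma tree_ray_passes:
  assumes "ray N ET q" "finite K" "K \<subseteq> N"
  shows "\<exists>i\<ge>n. K \<subseteq> side (tedge q i) (q i)"
proof -
  have "\<exists>P. finite P \<and> P \<subseteq> ET \<and> conn N P (q 0) k" if "k \<in> K" for k
    using that assms(3) tree_conn tree_ray_node[OF assms(1)] by (blast intro: conn_finite_edges)
  then obtain P where P: "\<And>k. k \<in> K \<Longrightarrow> finite (P k) \<and> P k \<subseteq> ET \<and> conn N (P k) (q 0) k"
    by metis
  have "finite (\<Union>k\<in>K. P k)" using P assms(2) by auto
  then obtain m where m: "\<forall>i\<ge>m. tedge q i \<notin> (\<Union>k\<in>K. P k)"
    using ray_eventually_avoids[OF assms(1)] by blast
  define i where "i = max m n"
  have "k \<in> side (tedge q i) (q i)" if k: "k \<in> K" for k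
  proof -
    have "conn N (ET - {tedge q i}) (q 0) k"
      using P[OF k] m by (elim conjE conn_mono) (auto simp: i_def k)
    moreover have "q 0 \<in> side (tedge q i) (q i)" using tree_ray_before[OF assms(1)] by simp
    ultimately show ?thesis using side_trans by blast
  qed
  then show ?thesis by (intro exI[of _ i]) (auto simp: i_def)
qed

lemma tree_ray_side:
  assumes "ray N ET q" "e \<in> ET" "u \<in> e" "u' \<in> e" "u \<noteq> u'"
  shows "has_tail_in q (side e u) \<or> has_tail_in q (side e u')"
  using assms(1) finite.insertI[OF finite.emptyI] side_adj_closed side_adj_closed
  by (rule ray_tail_in_closed) (use sides_cover[OF assms(2-5)] in blast)

lemma end_in_side_iff:
  assumes "\<eta> \<in> edge_ends N ET" "q \<in> \<eta>" "e \<in> ET"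
  shows "end_in_side \<eta> e u \<longleftrightarrow> has_tail_in q (side e u)"
proof -
  have "has_tail_in q' (side e u)" if "q' \<in> \<eta>" "has_tail_in q (side e u)" for q'
    using edge_end_equiv[OF assms(1,2) that(1)] _ _ side_adj_closed that(2)
    by (rule edge_equiv_tail_in_closed) (use assms(3) in auto)
  then show ?thesis using assms(2) by blast
qed

lemma tree_end_side_avoiding:
  assumes "\<eta> \<in> edge_ends N ET" "finite K" "K \<subseteq> N"
  shows "\<exists>e u. e \<in> ET \<and> u \<in> e \<and> end_in_side \<eta> e u \<and> side e u \<inter> K = {}"
proof -
  obtain q where q: "q \<in> \<eta>" using assms(1) by (rule edge_end_nonempty)
  have ray: "ray N ET q" using assms(1) q by (rule edge_end_ray)
  obtain i where i: "K \<subseteq> side (tedge q i) (q i)"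
    using tree_ray_passes[OF ray assms(2,3), of 0] by blast
  have "side (tedge q i) (q i) \<inter> side (tedge q i) (q (Suc i)) = {}"
    using ray by (rule tree_ray_sides_disjoint)
  moreover have "has_tail_in q (side (tedge q i) (q (Suc i)))"
    unfolding has_tail_in_def using tree_ray_after[OF ray] by (intro exI[of _ "Suc i"]) auto
  then have "end_in_side \<eta> (tedge q i) (q (Suc i))"
    using end_in_side_iff[OF assms(1) q tree_ray_edge[OF ray]] by blast
  ultimately show ?thesis using i tree_ray_edge[OF ray] by blast
qed

lemma side_conn_avoiding:
  assumes "side e u \<inter> \<Union>F = {}" "x \<in> side e u" "y \<in> side e u"
  shows "conn N (ET - F) x y"
proof -
  have "conn (side e u) ET x y"
    using side_conn[OF assms(2)] side_conn[OF assms(3)] by (meson conn_sym conn_trans)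
  then show ?thesis
    by (rule conn_adj_mono) (use assms(1) side_subset[of e u] in \<open>auto simp: adj_def\<close>)
qed

lemma tree_ends_separated:
  assumes "\<eta> \<in> edge_ends N ET" "\<eta>' \<in> edge_ends N ET" "\<eta> \<noteq> \<eta>'"
  shows "\<exists>e u u'. e \<in> ET \<and> u \<in> e \<and> u' \<in> e \<and> u \<noteq> u' \<and>
    end_in_side \<eta> e u \<and> end_in_side \<eta>' e u'"
proof -
  obtain q where q: "q \<in> \<eta>" using assms(1) by (rule edge_end_nonempty)
  obtain q' where q': "q' \<in> \<eta>'" using assms(2) by (rule edge_end_nonempty)
  have "\<not> edge_equiv N ET q q'" using edge_ends_eqI[OF assms(1,2) q q'] assms(3) by blast
  then obtain F where F: "finite F" "F \<subseteq> ET"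
    and separated: "\<not> (\<exists>n. \<forall>i\<ge>n. \<forall>j\<ge>n. conn N (ET - F) (q i) (q' j))"
    unfolding edge_equiv_def by blast
  have "finite (\<Union>F)" using tree_graph F by (rule finite_Union_edges)
  moreover have "\<Union>F \<subseteq> N" using tree_graph F(2) by (rule Union_edges_subset)
  ultimately obtain e u where e: "e \<in> ET" "u \<in> e" "end_in_side \<eta> e u" "side e u \<inter> \<Union>F = {}"
    using tree_end_side_avoiding[OF assms(1)] by iprover
  obtain u' where u': "u' \<noteq> u" "e = {u, u'}" using e(1,2) by (rule tree_edgeE)
  then have "u' \<in> e" by simp
  have "\<not> has_tail_in q' (side e u)"
  proof
    assume "has_tail_in q' (side e u)"
    then obtain m' where m': "\<forall>i\<ge>m'. q' i \<in> side e u" unfolding has_tail_in_def ..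
    have "has_tail_in q (side e u)" using e(3) q ..
    then obtain m where m: "\<forall>i\<ge>m. q i \<in> side e u" unfolding has_tail_in_def ..
    have "conn N (ET - F) (q i) (q' j)" if "i \<ge> max m m'" "j \<ge> max m m'" for i j
    proof (rule side_conn_avoiding[OF e(4)])
      show "q i \<in> side e u" "q' j \<in> side e u" using m m' that by auto
    qed
    then have "\<exists>n. \<forall>i\<ge>n. \<forall>j\<ge>n. conn N (ET - F) (q i) (q' j)" by blast
    with separated show False ..
  qed
  then have "has_tail_in q' (side e u')"
    using tree_ray_side[OF edge_end_ray[OF assms(2) q'] e(1,2) \<open>u' \<in> e\<close>] u'(1) by auto
  then have "end_in_side \<eta>' e u'"
    using end_in_side_iff[OF assms(2) q' e(1)] by blast
  with e(1-3) \<open>u' \<in> e\<close> u'(1) show ?thesis by blast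
qed

lemma part_nonempty: "t \<in> N \<Longrightarrow> X t \<noteq> {}"
  using decomp by (simp add: tree_cut_decomp_def)

lemma parts_all: "parts N = V"
  using decomp by (simp add: tree_cut_decomp_def)

lemma parts_disjoint: "t \<in> N \<Longrightarrow> s \<in> N \<Longrightarrow> t \<noteq> s \<Longrightarrow> X t \<inter> X s = {}"
  using decomp by (simp add: tree_cut_decomp_def)

lemma parts_subset: "S \<subseteq> N \<Longrightarrow> parts S \<subseteq> V"
  using parts_all by blast

definition node_of :: "'v \<Rightarrow> 'n" where
  "node_of x = (THE t. t \<in> N \<and> x \<in> X t)"

lemma node_of_eq:
  assumes "t \<in> N" "x \<in> X t"
  shows "node_of x = t"
  unfolding node_of_def using assms parts_disjoint by (intro the_equality) blast+

lemma node_of: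
  assumes "x \<in> V"
  shows "node_of x \<in> N" "x \<in> X (node_of x)"
proof -
  obtain t where "t \<in> N" "x \<in> X t" using assms parts_all by blast
  then show "node_of x \<in> N" "x \<in> X (node_of x)" using node_of_eq by simp_all
qed

lemma in_parts_iff: "S \<subseteq> N \<Longrightarrow> x \<in> parts S \<longleftrightarrow> x \<in> V \<and> node_of x \<in> S"
  using node_of node_of_eq parts_all by blast

lemma parts_sides_disjoint:
  assumes "e \<in> ET" "u \<in> e" "u' \<in> e" "u \<noteq> u'"
  shows "parts (side e u) \<inter> parts (side e u') = {}"
  using sides_disjoint[OF assms] side_subset parts_disjoint by blast

lemma parts_sides_cover:
  assumes "e \<in> ET" "u \<in> e" "u' \<in> e" "u \<noteq> u'" "x \<in> V"
  shows "x \<in> parts (side e u) \<or> x \<in> parts (side e u')"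
  using node_of[OF assms(5)] sides_cover[OF assms(1-4), of "node_of x"] by blast

text \<open>The adhesion set \<open>X\<^sub>e\<close> of a tree edge \<open>e\<close>, written symmetrically in the two
  endpoints of \<open>e\<close>.\<close>

definition cut_edges :: "'n set \<Rightarrow> 'v set set" where
  "cut_edges e = {g \<in> E. \<exists>x y. g = {x, y} \<and>
     (\<exists>u\<in>e. \<exists>u'\<in>e. u \<noteq> u' \<and> x \<in> parts (side e u) \<and> y \<in> parts (side e u'))}"

lemma cut_edges_subset: "cut_edges e \<subseteq> E"
  by (auto simp: cut_edges_def)

lemma cut_edgesI:
  "{x, y} \<in> E \<Longrightarrow> u \<in> e \<Longrightarrow> u' \<in> e \<Longrightarrow> u \<noteq> u' \<Longrightarrow> x \<in> parts (side e u) \<Longrightarrow>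
    y \<in> parts (side e u') \<Longrightarrow> {x, y} \<in> cut_edges e"
  unfolding cut_edges_def by blast

lemma finite_cut_edges:
  assumes "e \<in> ET"
  shows "finite (cut_edges e)"
proof -
  obtain a b where ab: "a \<noteq> b" "e = {a, b}"
    using tree_graph assms by (rule graph_edgeE) blast
  have "cut_edges e \<subseteq> adhesion E N ET X a b"
  proof
    fix g assume "g \<in> cut_edges e"
    then obtain x y u u' where g: "g \<in> E" "g = {x, y}" "u \<in> e" "u' \<in> e" "u \<noteq> u'"
      "x \<in> parts (side e u)" "y \<in> parts (side e u')"
      unfolding cut_edges_def by blast
    then have "(u = a \<and> u' = b) \<or> (u = b \<and> u' = a)" using ab by auto
    then show "g \<in> adhesion E N ET X a b"
    proof
      assume "u = a \<and> u' = b"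
      then show ?thesis using g ab unfolding adhesion_def by blast
    next
      assume "u = b \<and> u' = a"
      moreover have "g = {y, x}" using g by auto
      ultimately show ?thesis using g ab unfolding adhesion_def by blast
    qed
  qed
  moreover have "finite (adhesion E N ET X a b)"
    using finite_adh assms ab by (simp add: finite_adhesion_def)
  ultimately show ?thesis by (rule finite_subset)
qed

lemma cut_edges_adj_closed:
  assumes "e \<in> ET" "u \<in> e"
  shows "adj_closed V (E - cut_edges e) (parts (side e u))"
  unfolding adj_closed_def
proof (intro allI impI)
  fix p q assume p: "p \<in> parts (side e u)" and pq: "adj V (E - cut_edges e) p q"
  show "q \<in> parts (side e u)"
  proof (rule ccontr)
    assume q: "q \<notin> parts (side e u)"
    obtain u' where u': "u' \<noteq> u" "e = {u, u'}" using assms by (rule tree_edgeE)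
    have "q \<in> V" "{p, q} \<in> E" "{p, q} \<notin> cut_edges e" using pq by (auto simp: adj_def)
    moreover have "q \<in> parts (side e u')"
      using parts_sides_cover[OF assms, of u' q] u' q \<open>q \<in> V\<close> by auto
    ultimately show False using cut_edgesI[of p q u e u'] assms(2) p u' by auto
  qed
qed

lemma part_conn:
  assumes "t \<in> N" "x \<in> X t" "y \<in> X t" "finite F"
  shows "conn V (E - F) x y"
proof -
  have "X t \<in> V // edge_insep V E" using parts_are_blocks assms(1) by (auto simp: edge_blocks_def)
  then obtain z where "X t = edge_insep V E `` {z}" by (auto simp: quotient_def)
  then have "conn V (E - (F \<inter> E)) z x" "conn V (E - (F \<inter> E)) z y"
    using assms(2,3,4) unfolding edge_insep_def by auto
  moreover have "E - (F \<inter> E) = E - F" by auto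
  ultimately show ?thesis by (metis conn_sym conn_trans)
qed

lemma parts_conn:
  assumes S: "S \<subseteq> N" "a \<in> S" "\<And>s. s \<in> S \<Longrightarrow> conn S ET a s"
    and F: "finite F" "adj_closed V (E - F) (parts S)"
    and xy: "x \<in> parts S" "y \<in> parts S"
  shows "conn (parts S) E x y"
proof -
  have within_part: "conn (parts S) E x x'" if "s \<in> S" "x \<in> X s" "x' \<in> X s" for s x x'
  proof -
    have "conn V (E - F) x x'" using part_conn[of s x x' F] that S(1) F(1) by auto
    then have "conn (parts S) (E - F) x x'" by (rule conn_restrict) (use that F(2) in auto)
    then show ?thesis by (rule conn_mono) auto
  qed
  obtain x0 where x0: "x0 \<in> X a" using part_nonempty S by blast
  have reach: "\<forall>y\<in>X s. conn (parts S) E x0 y" if "conn S ET a s" for s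
    using that
  proof (induction rule: conn_induct)
    case base
    then show ?case using within_part x0 S(2) by blast
  next
    case (step z s)
    have zs: "z \<in> S" "s \<in> S" "{z, s} \<in> ET" using step(2) by (auto simp: adj_def)
    obtain p q where pq: "p \<in> X z" "q \<in> X s" "{p, q} \<in> E"
      using adjacent_parts_linked zs(3) by blast
    have "conn (parts S) E p q" using pq zs by (intro conn_edge) auto
    then have "conn (parts S) E x0 q" using step(3) pq(1) by (meson conn_trans)
    then show ?case using within_part[OF zs(2) pq(2)] by (meson conn_trans)
  qed
  obtain s1 s2 where "s1 \<in> S" "x \<in> X s1" "s2 \<in> S" "y \<in> X s2" using xy by blast
  then show ?thesis using reach S(3) by (meson conn_sym conn_trans)
qed

lemma parts_side_conn:
  assumes "e \<in> ET" "u \<in> e" "x \<in> parts (side e u)" "y \<in> parts (side e u)"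
  shows "conn (parts (side e u)) E x y"
proof (rule parts_conn)
  have "u \<in> N" using assms(1,2) by (rule tree_edgeE)
  then show "u \<in> side e u" by (rule side_self)
  show "adj_closed V (E - cut_edges e) (parts (side e u))"
    using assms(1,2) by (rule cut_edges_adj_closed)
qed (use assms side_subset side_conn finite_cut_edges in auto)

lemma parts_side_conn_avoiding:
  assumes "e \<in> ET" "u \<in> e" "parts (side e u) \<inter> \<Union>F = {}"
    "x \<in> parts (side e u)" "y \<in> parts (side e u)"
  shows "conn V (E - F) x y"
proof -
  have "conn (parts (side e u)) E x y" using parts_side_conn assms by blast
  then show ?thesis
    by (rule conn_adj_mono) (use assms(3) parts_subset[OF side_subset[of e u]] in \<open>auto simp: adj_def\<close>)
qed

lemma orient_iff_tail:
  assumes "\<omega> \<in> edge_ends V E" "r \<in> \<omega>" "e \<in> ET" "u \<in> e"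
  shows "orient \<omega> e u \<longleftrightarrow> has_tail_in r (parts (side e u))"
proof -
  have "has_tail_in s (parts (side e u))" if "s \<in> \<omega>" "has_tail_in r (parts (side e u))" for s
    using edge_end_equiv[OF assms(1,2) that(1)] finite_cut_edges[OF assms(3)] cut_edges_subset
      cut_edges_adj_closed[OF assms(3,4)] that(2)
    by (rule edge_equiv_tail_in_closed)
  then show ?thesis using assms(2) unfolding oriented_towards_def by blast
qed

lemma orient_some_side:
  assumes "\<omega> \<in> edge_ends V E" "e \<in> ET" "u \<in> e" "u' \<in> e" "u \<noteq> u'"
  shows "orient \<omega> e u \<or> orient \<omega> e u'"
proof -
  obtain r where r: "r \<in> \<omega>" using assms(1) by (rule edge_end_nonempty)
  have "has_tail_in r (parts (side e u)) \<or> has_tail_in r (parts (side e u'))"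
    using edge_end_ray[OF assms(1) r] finite_cut_edges[OF assms(2)]
      cut_edges_adj_closed[OF assms(2,3)] cut_edges_adj_closed[OF assms(2,4)]
    by (rule ray_tail_in_closed) (use parts_sides_cover[OF assms(2-5)] in blast)
  then show ?thesis
    using orient_iff_tail[OF assms(1) r assms(2)] assms(3,4) by blast
qed

lemma orient_unique:
  assumes "\<omega> \<in> edge_ends V E" "e \<in> ET" "u \<in> e" "u' \<in> e"
    "orient \<omega> e u" "orient \<omega> e u'"
  shows "u = u'"
proof (rule ccontr)
  assume "u \<noteq> u'"
  obtain r where r: "r \<in> \<omega>" using assms(1) by (rule edge_end_nonempty)
  have "has_tail_in r (parts (side e u))" "has_tail_in r (parts (side e u'))"
    using assms(5,6) r unfolding oriented_towards_def by blast+
  then have "parts (side e u) \<inter> parts (side e u') \<noteq> {}" by (rule has_tail_in_disjoint)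
  with parts_sides_disjoint[OF assms(2-4) \<open>u \<noteq> u'\<close>] show False by blast
qed

lemma orient_mono: "orient \<omega> e u \<Longrightarrow> side e u \<subseteq> side f w \<Longrightarrow> orient \<omega> f w"
  unfolding oriented_towards_def by (meson UN_mono has_tail_in_mono order_refl)

lemma points_to_Inl:
  "points_to N ET X \<omega> (Inl t) \<longleftrightarrow> (\<forall>e\<in>ET. \<forall>u\<in>e. t \<in> side e u \<longrightarrow> orient \<omega> e u)"
  by (simp add: points_to_def)

lemma points_to_Inr:
  "points_to N ET X \<omega> (Inr \<eta>) \<longleftrightarrow> (\<forall>e\<in>ET. \<forall>u\<in>e. end_in_side \<eta> e u \<longrightarrow> orient \<omega> e u)"
  by (simp add: points_to_def)

section \<open>The map \<open>phi\<close> is well defined\<close>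

lemma points_to_Inl_unique:
  assumes "\<omega> \<in> edge_ends V E" "t \<in> N" "s \<in> N"
    "points_to N ET X \<omega> (Inl t)" "points_to N ET X \<omega> (Inl s)"
  shows "t = s"
proof (rule ccontr)
  assume "t \<noteq> s"
  then obtain t' where t': "{t, t'} \<in> ET" "s \<in> side {t, t'} t'"
    using tree_step_towards assms(2,3) by blast
  have "orient \<omega> {t, t'} t" using assms(4) t'(1) side_self[OF assms(2)] by (auto simp: points_to_Inl)
  moreover have "orient \<omega> {t, t'} t'" using assms(5) t' by (auto simp: points_to_Inl)
  ultimately have "t = t'" using orient_unique[OF assms(1) t'(1)] by blast
  then show False using tree_edge[OF t'(1)] by blast
qed

lemma points_to_not_Inl_Inr:
  assumes "\<omega> \<in> edge_ends V E" "t \<in> N" "\<eta> \<in> edge_ends N ET"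
    "points_to N ET X \<omega> (Inl t)" "points_to N ET X \<omega> (Inr \<eta>)"
  shows False
proof -
  obtain q where q: "q \<in> \<eta>" using assms(3) by (rule edge_end_nonempty)
  have ray: "ray N ET q" using assms(3) q by (rule edge_end_ray)
  obtain i where "{t} \<subseteq> side (tedge q i) (q i)" using tree_ray_passes[OF ray, of "{t}" 0] assms(2) by auto
  then have "orient \<omega> (tedge q i) (q i)"
    using assms(4) tree_ray_edge[OF ray] by (auto simp: points_to_Inl)
  moreover have "has_tail_in q (side (tedge q i) (q (Suc i)))"
    unfolding has_tail_in_def using tree_ray_after[OF ray] by (intro exI[of _ "Suc i"]) auto
  then have "orient \<omega> (tedge q i) (q (Suc i))"
    using assms(5) end_in_side_iff[OF assms(3) q tree_ray_edge[OF ray]] tree_ray_edge[OF ray]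
    by (auto simp: points_to_Inr)
  ultimately show False
    using orient_unique[OF assms(1) tree_ray_edge[OF ray]] tree_ray_edge_ends_distinct[OF ray] by blast
qed

lemma points_to_Inr_unique:
  assumes "\<omega> \<in> edge_ends V E" "\<eta> \<in> edge_ends N ET" "\<eta>' \<in> edge_ends N ET"
    "points_to N ET X \<omega> (Inr \<eta>)" "points_to N ET X \<omega> (Inr \<eta>')"
  shows "\<eta> = \<eta>'"
proof (rule ccontr)
  assume "\<eta> \<noteq> \<eta>'"
  then obtain e u u' where e: "e \<in> ET" "u \<in> e" "u' \<in> e" "u \<noteq> u'"
    and sides: "end_in_side \<eta> e u" "end_in_side \<eta>' e u'"
    using tree_ends_separated[OF assms(2,3)] by iprover
  have "orient \<omega> e u" "orient \<omega> e u'"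
    using assms(4,5) e sides unfolding points_to_Inr by blast+
  then show False using orient_unique[OF assms(1) e(1-3)] e(4) by blast
qed

lemma points_to_unique:
  assumes "\<omega> \<in> edge_ends V E"
    and "z1 \<in> full_space N ET" "points_to N ET X \<omega> z1"
    and "z2 \<in> full_space N ET" "points_to N ET X \<omega> z2"
  shows "z1 = z2"
proof -
  have "(\<exists>t\<in>N. z1 = Inl t) \<or> (\<exists>\<eta>\<in>edge_ends N ET. z1 = Inr \<eta>)"
    "(\<exists>t\<in>N. z2 = Inl t) \<or> (\<exists>\<eta>\<in>edge_ends N ET. z2 = Inr \<eta>)"
    using assms(2,4) by (auto simp: full_space_def)
  then show ?thesis
  proof (elim disjE bexE)
    fix t s assume "t \<in> N" "z1 = Inl t" "s \<in> N" "z2 = Inl s"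
    then show ?thesis using points_to_Inl_unique[OF assms(1), of t s] assms(3,5) by simp
  next
    fix t \<eta> assume "t \<in> N" "z1 = Inl t" "\<eta> \<in> edge_ends N ET" "z2 = Inr \<eta>"
    then show ?thesis using points_to_not_Inl_Inr[OF assms(1), of t \<eta>] assms(3,5) by simp
  next
    fix t \<eta> assume "t \<in> N" "z2 = Inl t" "\<eta> \<in> edge_ends N ET" "z1 = Inr \<eta>"
    then show ?thesis using points_to_not_Inl_Inr[OF assms(1), of t \<eta>] assms(3,5) by simp
  next
    fix \<eta> \<eta>' assume "\<eta> \<in> edge_ends N ET" "z1 = Inr \<eta>" "\<eta>' \<in> edge_ends N ET" "z2 = Inr \<eta>'"
    then show ?thesis using points_to_Inr_unique[OF assms(1), of \<eta> \<eta>'] assms(3,5) by simp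
  qed
qed

lemma not_sink_out_edge:
  assumes "\<omega> \<in> edge_ends V E" "t \<in> N" "\<not> points_to N ET X \<omega> (Inl t)"
  shows "\<exists>t'. {t, t'} \<in> ET \<and> orient \<omega> {t, t'} t'"
proof (rule ccontr)
  assume no_out: "\<not> ?thesis"
  have towards_t: "orient \<omega> {t, t'} t" if "{t, t'} \<in> ET" for t'
    using no_out that orient_some_side[OF assms(1) that, of t t'] tree_edge[OF that] by auto
  have "points_to N ET X \<omega> (Inl t)" unfolding points_to_Inl
  proof (intro ballI impI)
    fix e u assume e: "e \<in> ET" "u \<in> e" and t: "t \<in> side e u"
    obtain u' where u': "u' \<noteq> u" "e = {u, u'}" "u' \<in> N" using e by (rule tree_edgeE)
    have "u' \<in> e" using u' by simp
    have disj: "side e u \<inter> side e u' = {}" using sides_disjoint[OF e \<open>u' \<in> e\<close>] u' by auto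
    show "orient \<omega> e u"
    proof (cases "t \<in> e")
      case True
      then have "t = u" using u' t disj side_self[OF u'(3)] by auto
      then show ?thesis using towards_t e(1) u' by simp
    next
      case False
      then obtain t' where t': "{t, t'} \<in> ET" "u' \<in> side {t, t'} t'"
        using tree_step_towards[OF assms(2) u'(3)] \<open>u' \<in> e\<close> by blast
      have "side e u' \<subseteq> side {t, t'} t'"
        using t' t disj by (intro side_within_side) auto
      show ?thesis
      proof (rule ccontr)
        assume "\<not> orient \<omega> e u"
        then have "orient \<omega> e u'" using orient_some_side[OF assms(1) e \<open>u' \<in> e\<close>] u' by auto
        then have "orient \<omega> {t, t'} t'" using \<open>side e u' \<subseteq> side {t, t'} t'\<close> by (rule orient_mono)
        then have "t = t'" using orient_unique[OF assms(1) t'(1)] towards_t[OF t'(1)] by blast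
        then show False using tree_edge[OF t'(1)] by blast
      qed
    qed
  qed
  with assms(3) show False by contradiction
qed

lemma oriented_walk_beyond:
  assumes \<omega>: "\<omega> \<in> edge_ends V E"
    and walk: "\<And>n. tedge q n \<in> ET \<and> orient \<omega> (tedge q n) (q (Suc n))"
    and "i < j"
  shows "q j \<in> side (tedge q i) (q (Suc i))"
  using \<open>i < j\<close>
proof (induction j)
  case (Suc j)
  have edge: "tedge q n \<in> ET" for n using walk by blast
  show ?case
  proof (cases "i = j")
    case True
    then show ?thesis using side_self tree_edge[OF edge[of i]] by simp
  next
    case False
    then have IH: "q j \<in> side (tedge q i) (q (Suc i))" using Suc by simp
    show ?thesis
    proof (cases "tedge q j = tedge q i")
      case False
      then show ?thesis using side_edge_same[OF edge False IH] by blast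
    next
      case True
      text \<open>The walk would turn back along the edge it came from, against the orientation.\<close>
      have "q j \<noteq> q i" using IH tree_edge_other_side[OF edge[of i]] by metis
      then have "q j = q (Suc i)" "q (Suc j) = q i" using True by (auto simp: doubleton_eq_iff)
      then have "orient \<omega> (tedge q i) (q i)" using walk[of j] True by simp
      then have "q i = q (Suc i)" using orient_unique[OF \<omega> edge] walk[of i] by blast
      then show ?thesis using tree_edge[OF edge[of i]] by blast
    qed
  qed
qed simp

lemma oriented_walk_ray:
  assumes "\<omega> \<in> edge_ends V E"
    and walk: "\<And>n. tedge q n \<in> ET \<and> orient \<omega> (tedge q n) (q (Suc n))"
  shows "ray N ET q"
proof -
  have "q i \<noteq> q j" if "i < j" for i j
    using oriented_walk_beyond[of \<omega> q, OF assms that] tree_edge_other_side walk by metis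
  then have "inj q" by (intro linorder_injI) simp
  then show ?thesis unfolding ray_def using walk tree_edge by blast
qed

lemma points_to_oriented_ray:
  assumes "\<omega> \<in> edge_ends V E" "ray N ET q"
    and forward: "\<And>i. orient \<omega> (tedge q i) (q (Suc i))"
  shows "points_to N ET X \<omega> (Inr (end_of N ET q))"
  unfolding points_to_Inr
proof (intro ballI impI)
  fix e u assume e: "e \<in> ET" "u \<in> e" and "end_in_side (end_of N ET q) e u"
  then obtain m where m: "\<forall>i\<ge>m. q i \<in> side e u"
    using end_of_self[OF assms(2)] by (auto simp: has_tail_in_def)
  show "orient \<omega> e u"
  proof (rule ccontr)
    assume "\<not> orient \<omega> e u"
    obtain u' where u': "u' \<noteq> u" "e = {u, u'}" "u' \<in> N" using e by (rule tree_edgeE)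
    then have "u' \<in> e" by simp
    with \<open>\<not> orient \<omega> e u\<close> have "orient \<omega> e u'"
      using orient_some_side[OF assms(1) e] u' by metis
    obtain i where i: "i \<ge> m" "{u'} \<subseteq> side (tedge q i) (q i)"
      using tree_ray_passes[OF assms(2), of "{u'}" m] u'(3) by auto
    have "q i \<in> side e u" using m i(1) by simp
    then have "\<not> tedge q i \<subseteq> side e u'"
      using sides_disjoint[OF e \<open>u' \<in> e\<close>] u'(1) by auto
    then have "side e u' \<subseteq> side (tedge q i) (q i)"
      using i(2) tree_ray_edge[OF assms(2)] by (intro side_within_side) auto
    with \<open>orient \<omega> e u'\<close> have "orient \<omega> (tedge q i) (q i)" by (rule orient_mono)
    then have "q i = q (Suc i)"
      using orient_unique[OF assms(1) tree_ray_edge[OF assms(2)]] forward by blast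
    then show False using tree_ray_edge_ends_distinct[OF assms(2)] by blast
  qed
qed

lemma points_to_exists:
  assumes "\<omega> \<in> edge_ends V E"
  shows "\<exists>z\<in>full_space N ET. points_to N ET X \<omega> z"
proof (cases "\<exists>t\<in>N. points_to N ET X \<omega> (Inl t)")
  case True
  then show ?thesis by (auto simp: full_space_def)
next
  case False
  then have out: "\<exists>t'. {t, t'} \<in> ET \<and> orient \<omega> {t, t'} t'" if "t \<in> N" for t
    using not_sink_out_edge[OF assms that] that by blast
  obtain t0 where t0: "t0 \<in> N" using tree by (auto simp: tree_def connected_graph_def)
  define next_node where "next_node t = (SOME t'. {t, t'} \<in> ET \<and> orient \<omega> {t, t'} t')" for t
  define q where "q n = (next_node ^^ n) t0" for n
  have walk: "q n \<in> N \<and> tedge q n \<in> ET \<and> orient \<omega> (tedge q n) (q (Suc n))" for n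
  proof (induction n)
    case 0
    have "{t0, next_node t0} \<in> ET \<and> orient \<omega> {t0, next_node t0} (next_node t0)"
      unfolding next_node_def by (rule someI_ex) (rule out[OF t0])
    then show ?case using t0 by (simp add: q_def)
  next
    case (Suc n)
    then have "q (Suc n) \<in> N" using tree_edge by blast
    have "{q (Suc n), next_node (q (Suc n))} \<in> ET \<and>
        orient \<omega> {q (Suc n), next_node (q (Suc n))} (next_node (q (Suc n)))"
      unfolding next_node_def using out[OF \<open>q (Suc n) \<in> N\<close>] by (rule someI_ex)
    then show ?case using \<open>q (Suc n) \<in> N\<close> by (simp add: q_def)
  qed
  then have "ray N ET q" by (intro oriented_walk_ray[OF assms]) blast
  then have "points_to N ET X \<omega> (Inr (end_of N ET q))"
    by (rule points_to_oriented_ray[OF assms]) (use walk in blast)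
  moreover have "Inr (end_of N ET q) \<in> full_space N ET"
    using end_of_in_edge_ends[OF \<open>ray N ET q\<close>] by (simp add: full_space_def)
  ultimately show ?thesis by blast
qed

lemma phi_spec:
  assumes "\<omega> \<in> edge_ends V E"
  shows "phi N ET X \<omega> \<in> full_space N ET" "points_to N ET X \<omega> (phi N ET X \<omega>)"
proof -
  have "\<exists>!z. z \<in> full_space N ET \<and> points_to N ET X \<omega> z"
    using points_to_exists[OF assms] points_to_unique[OF assms] by blast
  then have "phi N ET X \<omega> \<in> full_space N ET \<and> points_to N ET X \<omega> (phi N ET X \<omega>)"
    unfolding phi_def by (rule theI')
  then show "phi N ET X \<omega> \<in> full_space N ET" "points_to N ET X \<omega> (phi N ET X \<omega>)" by auto
qed

lemma phi_eqI:
  "\<omega> \<in> edge_ends V E \<Longrightarrow> z \<in> full_space N ET \<Longrightarrow> points_to N ET X \<omega> z \<Longrightarrow> phi N ET X \<omega> = z"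
  using phi_spec points_to_unique by blast

lemma phi_cases:
  assumes "\<omega> \<in> edge_ends V E"
  obtains (node) t where "t \<in> N" "phi N ET X \<omega> = Inl t" "points_to N ET X \<omega> (Inl t)"
  | (tree_end) \<eta> where "\<eta> \<in> edge_ends N ET" "phi N ET X \<omega> = Inr \<eta>" "points_to N ET X \<omega> (Inr \<eta>)"
proof -
  have "phi N ET X \<omega> \<in> Inl ` N \<union> Inr ` edge_ends N ET"
    using phi_spec(1)[OF assms] by (simp add: full_space_def)
  then show ?thesis
  proof (elim UnE imageE)
    fix t assume "t \<in> N" "phi N ET X \<omega> = Inl t"
    then show ?thesis using that(1) phi_spec(2)[OF assms] by simp
  next
    fix \<eta> assume "\<eta> \<in> edge_ends N ET" "phi N ET X \<omega> = Inr \<eta>"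
    then show ?thesis using that(2) phi_spec(2)[OF assms] by simp
  qed
qed

section \<open>Edge-dominated ends\<close>

lemma dominated_points_to:
  assumes "\<omega> \<in> edge_ends V E" "edge_dominates V E v \<omega>"
  shows "points_to N ET X \<omega> (Inl (node_of v))"
  unfolding points_to_Inl
proof (intro ballI impI)
  fix e u assume e: "e \<in> ET" "u \<in> e" "node_of v \<in> side e u"
  have "v \<in> V" using assms(2) by (simp add: edge_dominates_def)
  then have v: "v \<in> parts (side e u)" using node_of e(3) by blast
  show "orient \<omega> e u"
    unfolding oriented_towards_def
    using dominated_tail_in_closed[OF assms(2) _ finite_cut_edges[OF e(1)] cut_edges_subset
        cut_edges_adj_closed[OF e(1,2)] v] by blast
qed

lemma phi_dominated:
  assumes "\<omega> \<in> edge_ends V E" "edge_dominates V E v \<omega>"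
  shows "phi N ET X \<omega> = Inl (node_of v)"
proof (rule phi_eqI[OF assms(1) _ dominated_points_to[OF assms]])
  have "v \<in> V" using assms(2) by (simp add: edge_dominates_def)
  then show "Inl (node_of v) \<in> full_space N ET" using node_of by (simp add: full_space_def)
qed

lemma part_meets_closed:
  assumes "finite F" "adj_closed V (E - F) C" "s \<in> N" "X s \<inter> C \<noteq> {}"
  shows "X s \<subseteq> C"
proof
  fix y assume "y \<in> X s"
  obtain x where "x \<in> X s" "x \<in> C" using assms(4) by blast
  with part_conn[OF assms(3) _ \<open>y \<in> X s\<close> assms(1)] show "y \<in> C"
    using conn_closed assms(2) by metis
qed

lemma branch_meets_cut:
  assumes F: "finite F" "adj_closed V (E - F) C" and t: "t \<in> N" "X t \<inter> C = {}"
    and branch: "{t, t'} \<in> ET" "parts (side {t, t'} t') \<inter> C \<noteq> {}"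
  shows "parts (side {t, t'} t') \<inter> \<Union>F \<noteq> {}"
proof -
  define S where "S = side {t, t'} t'"
  have "t' \<in> N" using tree_edge[OF branch(1)] by blast
  obtain s0 where s0: "s0 \<in> S" "X s0 \<inter> C \<noteq> {}" using branch(2) by (auto simp: S_def)
  have "conn S ET t' s0" using side_conn[of s0 "{t, t'}" t'] s0(1) by (simp add: S_def)
  then have "conn (insert t S) ET t' s0" by (rule conn_mono) auto
  moreover have "adj (insert t S) ET t t'"
    using branch(1) side_self[OF \<open>t' \<in> N\<close>] by (auto simp: adj_def S_def)
  ultimately have "conn (insert t S) ET t s0"
    using conn_step conn_refl conn_trans by metis
  moreover have "X s0 \<subseteq> C" using part_meets_closed[OF F _ s0(2)] s0(1) side_subset by (auto simp: S_def)
  moreover have "\<not> X t \<subseteq> C" using t part_nonempty by blast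
  text \<open>Some tree edge \<open>ab\<close> on the way from \<open>t\<close> to \<open>s0\<close> leads into \<open>C\<close>; the edge of \<open>G\<close>
    joining \<open>X a\<close> and \<open>X b\<close> then leaves \<open>C\<close>, so it lies in \<open>F\<close>.\<close>
  ultimately obtain a b where ab: "adj (insert t S) ET a b" "\<not> X a \<subseteq> C" "X b \<subseteq> C"
    using conn_crossing_edge[of "insert t S" ET t s0 "\<lambda>s. X s \<subseteq> C"] by blast
  have abE: "{a, b} \<in> ET" "a \<in> N" "b \<in> N" using ab(1) tree_edge by (auto simp: adj_def)
  have "b \<noteq> t" using ab(3) t part_nonempty[OF t(1)] by blast
  then have "b \<in> S" using ab(1) by (auto simp: adj_def)
  obtain p q where pq: "p \<in> X a" "q \<in> X b" "{p, q} \<in> E"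
    using adjacent_parts_linked abE(1) by blast
  have "q \<in> C" using ab(3) pq(2) by blast
  have "p \<notin> C" using part_meets_closed[OF F abE(2)] ab(2) pq(1) by blast
  have "{p, q} \<in> F"
  proof (rule ccontr)
    assume "{p, q} \<notin> F"
    then have "adj V (E - F) q p"
      using pq(3) graph_edge[OF graph pq(3)] by (auto simp: adj_def insert_commute)
    with F(2) \<open>q \<in> C\<close> \<open>p \<notin> C\<close> show False unfolding adj_closed_def by blast
  qed
  then have "q \<in> \<Union>F" by blast
  moreover have "q \<in> parts S" using \<open>b \<in> S\<close> pq(2) by blast
  ultimately show ?thesis by (auto simp: S_def)
qed

lemma finite_branches_meeting:
  assumes F: "finite F" "F \<subseteq> E" "adj_closed V (E - F) C" and t: "t \<in> N" "X t \<inter> C = {}"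
  shows "finite {t'. {t, t'} \<in> ET \<and> parts (side {t, t'} t') \<inter> C \<noteq> {}}" (is "finite ?B")
proof -
  define g where "g t' = (SOME y. y \<in> \<Union>F \<and> y \<in> parts (side {t, t'} t'))" for t'
  have g: "g t' \<in> \<Union>F \<and> g t' \<in> parts (side {t, t'} t')" if "t' \<in> ?B" for t'
  proof -
    have "parts (side {t, t'} t') \<inter> \<Union>F \<noteq> {}"
      using that by (intro branch_meets_cut[OF F(1,3) t]) auto
    then have "\<exists>y. y \<in> \<Union>F \<and> y \<in> parts (side {t, t'} t')" by blast
    then show ?thesis unfolding g_def by (rule someI_ex)
  qed
  have "inj_on g ?B"
  proof (rule inj_onI)
    fix a b assume ab: "a \<in> ?B" "b \<in> ?B" "g a = g b"
    show "a = b"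
    proof (rule ccontr)
      assume "a \<noteq> b"
      then have "side {t, a} a \<inter> side {t, b} b = {}"
        using ab(1,2) by (intro branches_disjoint) auto
      then have "parts (side {t, a} a) \<inter> parts (side {t, b} b) = {}"
        using side_subset parts_disjoint by blast
      moreover have "g a \<in> parts (side {t, a} a)" "g a \<in> parts (side {t, b} b)"
        using g[OF ab(1)] g[OF ab(2)] ab(3) by auto
      ultimately show False by blast
    qed
  qed
  moreover have "g ` ?B \<subseteq> \<Union>F"
  proof
    fix y assume "y \<in> g ` ?B"
    then obtain t' where "t' \<in> ?B" "y = g t'" by blast
    then show "y \<in> \<Union>F" using g by simp
  qed
  moreover have "finite (\<Union>F)" using graph F(1,2) by (rule finite_Union_edges)
  ultimately show ?thesis using inj_on_finite by blast
qed

text \<open>If \<open>C\<close> missed \<open>X t\<close>, the tail would eventually stay in one of the finitely many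
  branches at \<open>t\<close> that meet \<open>C\<close>, against the orientation of the edge leading to it.\<close>

lemma sink_component_meets_part:
  assumes \<omega>: "\<omega> \<in> edge_ends V E" "r \<in> \<omega>"
    and sink: "t \<in> N" "points_to N ET X \<omega> (Inl t)"
    and F: "finite F" "F \<subseteq> E" "adj_closed V (E - F) C" "\<forall>i\<ge>n. r i \<in> C"
  shows "X t \<inter> C \<noteq> {}"
proof
  assume disj: "X t \<inter> C = {}"
  define B where "B = {t'. {t, t'} \<in> ET \<and> parts (side {t, t'} t') \<inter> C \<noteq> {}}"
  define F' where "F' = (\<Union>t'\<in>B. cut_edges {t, t'})"
  have "finite F'"
    using finite_branches_meeting[OF F(1-3) sink(1) disj] finite_cut_edges
    unfolding F'_def B_def by blast
  then obtain n' where n': "\<forall>i\<ge>n'. {r i, r (Suc i)} \<notin> F'"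
    using ray_eventually_avoids[OF edge_end_ray[OF \<omega>]] by blast
  define m where "m = max n n'"
  have rm: "r m \<in> V" "r m \<in> C"
    using edge_end_ray[OF \<omega>] F(4) by (auto simp: ray_def m_def)
  have "node_of (r m) \<noteq> t" using node_of(2)[OF rm(1)] rm(2) disj by auto
  then obtain t' where t': "{t, t'} \<in> ET" "node_of (r m) \<in> side {t, t'} t'"
    using tree_step_towards[OF sink(1) node_of(1)[OF rm(1)]] by metis
  have rm_branch: "r m \<in> parts (side {t, t'} t')" using t'(2) node_of(2)[OF rm(1)] by blast
  then have "t' \<in> B" using t'(1) rm(2) by (auto simp: B_def)
  have "conn V (E - cut_edges {t, t'}) (r m) (r i)" if "i \<ge> m" for i
    using edge_end_ray[OF \<omega>] that n' \<open>t' \<in> B\<close> 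
    by (intro ray_segment_conn) (auto simp: F'_def m_def)
  then have "has_tail_in r (parts (side {t, t'} t'))"
    using conn_closed[OF _ rm_branch cut_edges_adj_closed[OF t'(1)]]
    unfolding has_tail_in_def by blast
  then have "orient \<omega> {t, t'} t'" using orient_iff_tail[OF \<omega> t'(1)] by simp
  moreover have "orient \<omega> {t, t'} t"
    using sink(2) t'(1) side_self[OF sink(1)] by (auto simp: points_to_Inl)
  ultimately show False using orient_unique[OF \<omega>(1) t'(1)] tree_edge[OF t'(1)] by blast
qed

lemma sink_dominated:
  assumes "\<omega> \<in> edge_ends V E" "t \<in> N" "points_to N ET X \<omega> (Inl t)" "v \<in> X t"
  shows "edge_dominates V E v \<omega>"
  unfolding edge_dominates_def
proof (intro conjI allI impI ballI)
  show "v \<in> V" using parts_all assms(2,4) by blast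
  fix F r assume F: "finite F \<and> F \<subseteq> E" and r: "r \<in> \<omega>"
  have ray: "ray V E r" using assms(1) r by (rule edge_end_ray)
  obtain n where n: "\<forall>i\<ge>n. {r i, r (Suc i)} \<notin> F"
    using ray_eventually_avoids[OF ray] F by blast
  define C where "C = {x. conn V (E - F) (r n) x}"
  have tail: "\<forall>i\<ge>n. r i \<in> C" using ray_tail_conn[OF ray n] by (simp add: C_def)
  have closed: "adj_closed V (E - F) C" unfolding C_def by (rule adj_closed_component)
  have "X t \<inter> C \<noteq> {}"
    using F by (intro sink_component_meets_part[OF assms(1) r assms(2,3) _ _ closed tail]) auto
  then have "v \<in> C"
    using part_meets_closed[OF _ closed assms(2)] F assms(4) by blast
  then have "conn V (E - F) (r n) v" by (simp add: C_def)
  moreover have "conn V (E - F) (r n) (r i)" if "i \<ge> n" for i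
    using tail that by (simp add: C_def)
  ultimately have "conn V (E - F) v (r i)" if "i \<ge> n" for i
    using that by (meson conn_sym conn_trans)
  then show "\<exists>n. \<forall>i\<ge>n. conn V (E - F) v (r i)" by blast
qed

lemma dominated_iff_phi_node:
  assumes "\<omega> \<in> edge_ends V E"
  shows "(\<exists>v. edge_dominates V E v \<omega>) \<longleftrightarrow> phi N ET X \<omega> \<in> Inl ` N"
proof
  assume "\<exists>v. edge_dominates V E v \<omega>"
  then obtain v where v: "edge_dominates V E v \<omega>" by blast
  then have "v \<in> V" by (simp add: edge_dominates_def)
  then show "phi N ET X \<omega> \<in> Inl ` N" using phi_dominated[OF assms v] node_of by blast
next
  assume "phi N ET X \<omega> \<in> Inl ` N"
  then obtain t where t: "t \<in> N" "phi N ET X \<omega> = Inl t" by blast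
  obtain v where "v \<in> X t" using part_nonempty[OF t(1)] by blast
  then show "\<exists>v. edge_dominates V E v \<omega>"
    using sink_dominated[OF assms t(1)] phi_spec(2)[OF assms] t(2) by auto
qed

lemma phi_node_dominating_vertices:
  assumes "\<omega> \<in> edge_ends V E" "phi N ET X \<omega> = Inl t"
  shows "X t = {v. edge_dominates V E v \<omega>}"
proof
  have "t \<in> N" using phi_spec(1)[OF assms(1)] assms(2) by (auto simp: full_space_def)
  then show "X t \<subseteq> {v. edge_dominates V E v \<omega>}"
    using sink_dominated[OF assms(1)] phi_spec(2)[OF assms(1)] assms(2) by auto
  show "{v. edge_dominates V E v \<omega>} \<subseteq> X t"
  proof
    fix v assume "v \<in> {v. edge_dominates V E v \<omega>}"
    then have v: "edge_dominates V E v \<omega>" by simp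
    then have "node_of v = t" using phi_dominated[OF assms(1)] assms(2) by simp
    moreover have "v \<in> V" using v by (simp add: edge_dominates_def)
    ultimately show "v \<in> X t" using node_of(2) by blast
  qed
qed

section \<open>Injectivity, and the ends of \<open>T\<close>\<close>

lemma tree_end_side_avoiding_edges:
  assumes "\<eta> \<in> edge_ends N ET" "finite F" "F \<subseteq> E"
  shows "\<exists>e u. e \<in> ET \<and> u \<in> e \<and> end_in_side \<eta> e u \<and> parts (side e u) \<inter> \<Union>F = {}"
proof -
  have "\<Union>F \<subseteq> V" using graph assms(3) by (rule Union_edges_subset)
  then have "node_of ` \<Union>F \<subseteq> N" using node_of(1) by blast
  moreover have "finite (node_of ` \<Union>F)" using finite_Union_edges[OF graph assms(2,3)] by blast
  ultimately obtain e u where e: "e \<in> ET" "u \<in> e" "end_in_side \<eta> e u"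
    and avoid: "side e u \<inter> node_of ` \<Union>F = {}"
    using tree_end_side_avoiding[OF assms(1)] by iprover
  have "parts (side e u) \<inter> \<Union>F = {}"
    using avoid in_parts_iff[OF side_subset] by blast
  with e show ?thesis by blast
qed

lemma points_to_same_end:
  assumes "\<omega> \<in> edge_ends V E" "\<omega>' \<in> edge_ends V E" "\<eta> \<in> edge_ends N ET"
    and "points_to N ET X \<omega> (Inr \<eta>)" "points_to N ET X \<omega>' (Inr \<eta>)"
  shows "\<omega> = \<omega>'"
proof -
  obtain r where r: "r \<in> \<omega>" using assms(1) by (rule edge_end_nonempty)
  obtain r' where r': "r' \<in> \<omega>'" using assms(2) by (rule edge_end_nonempty)
  have "edge_equiv V E r r'"
    unfolding edge_equiv_def
  proof (intro allI impI)
    fix F assume "finite F \<and> F \<subseteq> E"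
    then obtain e u where e: "e \<in> ET" "u \<in> e" "end_in_side \<eta> e u"
      and avoid: "parts (side e u) \<inter> \<Union>F = {}"
      using tree_end_side_avoiding_edges[OF assms(3)] by iprover
    have "orient \<omega> e u" "orient \<omega>' e u"
      using assms(4,5) e unfolding points_to_Inr by blast+
    then obtain n n' where "\<forall>i\<ge>n. r i \<in> parts (side e u)" "\<forall>i\<ge>n'. r' i \<in> parts (side e u)"
      using r r' unfolding oriented_towards_def has_tail_in_def by meson
    then have "conn V (E - F) (r i) (r' j)" if "i \<ge> max n n'" "j \<ge> max n n'" for i j
      using parts_side_conn_avoiding[OF e(1,2) avoid] that by simp
    then show "\<exists>m. \<forall>i\<ge>m. \<forall>j\<ge>m. conn V (E - F) (r i) (r' j)" by blast
  qed
  then show ?thesis using edge_ends_eqI[OF assms(1,2) r r'] by blast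
qed

lemma phi_inj: "inj_on (phi N ET X) (edge_ends V E)"
proof (rule inj_onI)
  fix \<omega> \<omega>' assume \<omega>: "\<omega> \<in> edge_ends V E" and \<omega>': "\<omega>' \<in> edge_ends V E"
    and eq: "phi N ET X \<omega> = phi N ET X \<omega>'"
  from \<omega> show "\<omega> = \<omega>'"
  proof (cases rule: phi_cases)
    case (node t)
    obtain v where "v \<in> X t" using part_nonempty[OF node(1)] by blast
    moreover have "points_to N ET X \<omega>' (Inl t)" using phi_spec(2)[OF \<omega>'] eq node(2) by simp
    ultimately show ?thesis
      using sink_dominated[OF \<omega> node(1,3)] sink_dominated[OF \<omega>' node(1)]
      by (intro edge_ends_eq_if_dominated[OF \<omega> \<omega>']) auto
  next
    case (tree_end \<eta>)
    have "points_to N ET X \<omega>' (Inr \<eta>)" using phi_spec(2)[OF \<omega>'] eq tree_end(2) by simp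
    then show ?thesis using points_to_same_end[OF \<omega> \<omega>' tree_end(1,3)] by blast
  qed
qed

lemma ray_along_tree_ray:
  assumes ray: "ray N ET q"
  shows "\<exists>r. ray V E r \<and> (\<forall>k. has_tail_in r (parts (side (tedge q k) (q (Suc k)))))"
proof -
  define S where "S k = side (tedge q k) (q (Suc k))" for k
  have decr: "S (Suc k) \<subseteq> S k" for k
    unfolding S_def
  proof (rule side_within_side[OF tree_ray_edge[OF ray]])
    have "q k \<in> side (tedge q (Suc k)) (q (Suc k))" using tree_ray_before[OF ray] by simp
    then show "\<not> tedge q k \<subseteq> side (tedge q (Suc k)) (q (Suc (Suc k)))"
      using tree_ray_sides_disjoint[OF ray, of "Suc k"] by (auto simp: disjoint_iff)
    show "q (Suc (Suc k)) \<in> side (tedge q k) (q (Suc k))"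
      using tree_ray_after[OF ray] by simp
  qed
  show ?thesis
    unfolding S_def[symmetric]
  proof (rule nested_sets_ray)
    show "parts (S (Suc k)) \<subseteq> parts (S k)" for k using decr by blast
    show "conn (parts (S k)) E x y" if "x \<in> parts (S k)" "y \<in> parts (S k)" for k x y
      using that parts_side_conn[OF tree_ray_edge[OF ray]] by (simp add: S_def)
    show "parts (S k) \<noteq> {}" for k
      using side_self[OF tree_ray_node[OF ray]] part_nonempty[OF tree_ray_node[OF ray]]
      unfolding S_def by blast
    show "parts (S 0) \<subseteq> V" using parts_subset[OF side_subset] by (simp add: S_def)
    show "\<exists>k. x \<notin> parts (S k)" for x
    proof (cases "x \<in> V")
      case True
      then obtain k where "{node_of x} \<subseteq> side (tedge q k) (q k)"
        using tree_ray_passes[OF ray, of "{node_of x}" 0] node_of(1) by auto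
      then have "node_of x \<notin> S k"
        using tree_ray_sides_disjoint[OF ray, of k] unfolding S_def by blast
      then show ?thesis using in_parts_iff[OF side_subset] unfolding S_def by blast
    next
      case False
      then have "x \<notin> parts (S 0)"
        using parts_subset[OF side_subset[of _ "q (Suc 0)"]] by (auto simp: S_def)
      then show ?thesis by blast
    qed
  qed
qed

lemma phi_onto_tree_ends:
  assumes "\<eta> \<in> edge_ends N ET"
  shows "\<exists>\<omega>\<in>edge_ends V E. phi N ET X \<omega> = Inr \<eta>"
proof -
  obtain q where q: "q \<in> \<eta>" using assms by (rule edge_end_nonempty)
  have ray: "ray N ET q" using assms q by (rule edge_end_ray)
  obtain r where r: "ray V E r" "\<And>k. has_tail_in r (parts (side (tedge q k) (q (Suc k))))"
    using ray_along_tree_ray[OF ray] by blast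
  define \<omega> where "\<omega> = end_of V E r"
  have \<omega>: "\<omega> \<in> edge_ends V E" "r \<in> \<omega>"
    using end_of_in_edge_ends[OF r(1)] end_of_self[OF r(1)] by (simp_all add: \<omega>_def)
  have "orient \<omega> (tedge q k) (q (Suc k))" for k
    using orient_iff_tail[OF \<omega> tree_ray_edge[OF ray]] r(2) by simp
  then have "points_to N ET X \<omega> (Inr (end_of N ET q))"
    by (rule points_to_oriented_ray[OF \<omega>(1) ray])
  moreover have "end_of N ET q = \<eta>" using edge_end_eq_end_of[OF assms q] by simp
  ultimately have "phi N ET X \<omega> = Inr \<eta>"
    using assms by (intro phi_eqI[OF \<omega>(1)]) (simp_all add: full_space_def)
  with \<omega> show ?thesis by blast
qed

lemma phi_undominated_bij:
  "bij_betw (phi N ET X) {\<omega> \<in> edge_ends V E. \<not> (\<exists>v. edge_dominates V E v \<omega>)}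
     (Inr ` edge_ends N ET)"
proof (rule bij_betw_imageI)
  show "inj_on (phi N ET X) {\<omega> \<in> edge_ends V E. \<not> (\<exists>v. edge_dominates V E v \<omega>)}"
    using phi_inj by (rule inj_on_subset) blast
  have iff: "phi N ET X \<omega> \<in> Inr ` edge_ends N ET \<longleftrightarrow> \<not> (\<exists>v. edge_dominates V E v \<omega>)"
    if "\<omega> \<in> edge_ends V E" for \<omega>
    using dominated_iff_phi_node[OF that] phi_spec(1)[OF that] by (auto simp: full_space_def)
  show "phi N ET X ` {\<omega> \<in> edge_ends V E. \<not> (\<exists>v. edge_dominates V E v \<omega>)} =
      Inr ` edge_ends N ET"
  proof
    show "phi N ET X ` {\<omega> \<in> edge_ends V E. \<not> (\<exists>v. edge_dominates V E v \<omega>)}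
        \<subseteq> Inr ` edge_ends N ET"
      using iff by blast
    show "Inr ` edge_ends N ET
        \<subseteq> phi N ET X ` {\<omega> \<in> edge_ends V E. \<not> (\<exists>v. edge_dominates V E v \<omega>)}"
    proof
      fix z :: "'n + (nat \<Rightarrow> 'n) set" assume "z \<in> Inr ` edge_ends N ET"
      then obtain \<eta> where "\<eta> \<in> edge_ends N ET" "z = Inr \<eta>" by blast
      then obtain \<omega> where "\<omega> \<in> edge_ends V E" "phi N ET X \<omega> = z"
        using phi_onto_tree_ends by metis
      then show "z \<in> phi N ET X ` {\<omega> \<in> edge_ends V E. \<not> (\<exists>v. edge_dominates V E v \<omega>)}"
        using iff \<open>z = Inr \<eta>\<close> \<open>\<eta> \<in> edge_ends N ET\<close> by (intro rev_image_eqI) auto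
    qed
  qed
qed

section \<open>Continuity and openness\<close>

abbreviation tree_nbhd :: "'n set \<Rightarrow> ('n + (nat \<Rightarrow> 'n) set) set" where
  "tree_nbhd D \<equiv> Inl ` D \<union> Inr ` region_ends N ET D"

lemma parts_side_region:
  assumes "e \<in> ET" "u \<in> e"
  shows "region V E (parts (side e u))"
proof -
  have "u \<in> N" using assms by (rule tree_edgeE)
  then have "parts (side e u) \<noteq> {}" using part_nonempty side_self[of u e] by blast
  moreover have "finite (boundary E (parts (side e u)))"
    using boundary_subset[OF graph cut_edges_adj_closed[OF assms] parts_subset[OF side_subset]]
      finite_cut_edges[OF assms(1)] by (rule finite_subset)
  ultimately show ?thesis
    using parts_subset[OF side_subset] parts_side_conn[OF assms]
    unfolding region_def connected_graph_def by blast
qed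

lemma parts_side_within_region:
  assumes "region V E C" "e \<in> ET" "u \<in> e" "parts (side e u) \<inter> \<Union>(boundary E C) = {}"
    "x \<in> parts (side e u)" "x \<in> C"
  shows "parts (side e u) \<subseteq> C"
proof
  fix y assume "y \<in> parts (side e u)"
  with assms(2-5) have "conn V (E - boundary E C) x y" by (rule parts_side_conn_avoiding)
  then show "y \<in> C" using assms(6) region_adj_closed[OF assms(1)] by (rule conn_closed)
qed

lemma side_within_region:
  assumes "s0 \<in> side e u" "s0 \<in> D" "side e u \<inter> \<Union>(boundary ET D) = {}"
  shows "side e u \<subseteq> D"
proof
  fix s assume s: "s \<in> side e u"
  have "conn (side e u) ET s0 s"
    using side_conn[OF assms(1)] side_conn[OF s] by (meson conn_sym conn_trans)
  show "s \<in> D"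
  proof (rule ccontr)
    assume "s \<notin> D"
    then obtain x y where "adj (side e u) ET x y" "x \<in> D" "y \<notin> D"
      using conn_crossing_edge[OF \<open>conn (side e u) ET s0 s\<close>, of "\<lambda>x. x \<notin> D"] assms(2) by blast
    then have "{x, y} \<in> boundary ET D" "y \<in> side e u" by (auto simp: adj_def boundary_def)
    then show False using assms(3) by blast
  qed
qed

lemma boundary_side:
  assumes "region N ET D" "a \<in> D" "b \<in> N" "b \<notin> D"
  shows "\<exists>c d. {c, d} \<in> ET \<and> c \<noteq> d \<and> b \<in> side {c, d} d \<and> D \<subseteq> side {c, d} c
    \<and> {c, d} \<in> boundary ET D"
proof -
  have "D \<subseteq> N" using assms(1) by (simp add: region_def)
  then obtain c d where cd: "{c, d} \<in> ET" "c \<in> D" "d \<notin> D" "b \<in> side {c, d} d"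
    using leaving_edge[OF assms(2) _ assms(3)] assms(2,4) by blast
  have "c \<noteq> d" "c \<in> N" using tree_edge[OF cd(1)] by auto
  have "s \<in> side {c, d} c" if "s \<in> D" for s
  proof -
    have "conn D ET c s" using assms(1) cd(2) that by (simp add: region_def connected_graph_def)
    then show ?thesis
      by (rule conn_stays_side[OF _ cd(1) _ side_self[OF \<open>c \<in> N\<close>]]) (use cd(3) in auto)
  qed
  moreover have "{c, d} \<in> boundary ET D" using cd by (auto simp: boundary_def)
  ultimately show ?thesis using cd \<open>c \<noteq> d\<close> by blast
qed

definition boundary_cut_edges :: "'n set \<Rightarrow> 'v set set" where
  "boundary_cut_edges D = (\<Union>e\<in>boundary ET D. cut_edges e)"

lemma finite_boundary_cut_edges: "region N ET D \<Longrightarrow> finite (boundary_cut_edges D)"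
  unfolding boundary_cut_edges_def region_def using finite_cut_edges by (auto simp: boundary_def)

lemma parts_region_adj_closed:
  assumes "region N ET D"
  shows "adj_closed V (E - boundary_cut_edges D) (parts D)"
  unfolding adj_closed_def
proof (intro allI impI)
  fix p q assume p: "p \<in> parts D" and pq: "adj V (E - boundary_cut_edges D) p q"
  show "q \<in> parts D"
  proof (rule ccontr)
    assume q: "q \<notin> parts D"
    obtain a where a: "a \<in> D" "p \<in> X a" using p by blast
    have "q \<in> V" using pq by (simp add: adj_def)
    then have "node_of q \<notin> D" using q node_of by blast
    then obtain c d where cd: "{c, d} \<in> ET" "c \<noteq> d" "node_of q \<in> side {c, d} d"
      "D \<subseteq> side {c, d} c" "{c, d} \<in> boundary ET D"
      using boundary_side[OF assms a(1) node_of(1)[OF \<open>q \<in> V\<close>]] by blast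
    have "{p, q} \<in> cut_edges {c, d}"
      using pq a cd(2-4) node_of[OF \<open>q \<in> V\<close>] by (intro cut_edgesI) (auto simp: adj_def)
    then show False using pq cd(5) by (auto simp: adj_def boundary_cut_edges_def)
  qed
qed

lemma not_oriented_away_from_region:
  assumes "\<omega> \<in> edge_ends V E" "r \<in> \<omega>" "has_tail_in r (parts D)"
    and "{c, d} \<in> ET" "c \<noteq> d" "D \<subseteq> side {c, d} c"
  shows "\<not> orient \<omega> {c, d} d"
proof
  assume "orient \<omega> {c, d} d"
  moreover have "has_tail_in r (parts (side {c, d} c))"
    using assms(3) by (rule has_tail_in_mono) (use assms(6) in blast)
  then have "orient \<omega> {c, d} c" using orient_iff_tail[OF assms(1,2,4)] by simp
  ultimately show False using orient_unique[OF assms(1,4)] assms(5) by blast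
qed

lemma tree_ray_tail_region:
  assumes D: "region N ET D" "t0 \<in> D" and ray: "ray N ET q"
  shows "has_tail_in q D \<or>
    (\<exists>c d. {c, d} \<in> ET \<and> c \<noteq> d \<and> D \<subseteq> side {c, d} c \<and> has_tail_in q (side {c, d} d))"
proof -
  have "finite (boundary ET D)" using D by (simp add: region_def)
  then obtain n where n: "\<forall>i\<ge>n. tedge q i \<notin> boundary ET D"
    using ray_eventually_avoids[OF ray] by blast
  show ?thesis
  proof (cases "q n \<in> D")
    case True
    then show ?thesis using ray_stays_in_closed[OF ray n region_adj_closed[OF D(1)]] by blast
  next
    case False
    then obtain c d where cd: "{c, d} \<in> ET" "c \<noteq> d" "q n \<in> side {c, d} d"
      "D \<subseteq> side {c, d} c" "{c, d} \<in> boundary ET D"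
      using boundary_side[OF D tree_ray_node[OF ray]] by blast
    have "adj_closed N (ET - boundary ET D) (side {c, d} d)"
      using side_adj_closed by (rule adj_closed_mono) (use cd(5) in blast)
    then have "has_tail_in q (side {c, d} d)"
      using ray_stays_in_closed[OF ray n] cd(3) by blast
    then show ?thesis using cd(1,2,4) by blast
  qed
qed

lemma phi_in_tree_nbhd:
  assumes D: "region N ET D" and \<omega>: "\<omega> \<in> edge_ends V E" "r \<in> \<omega>" "has_tail_in r (parts D)"
  shows "phi N ET X \<omega> \<in> tree_nbhd D"
proof -
  obtain t0 where t0: "t0 \<in> D" using D by (auto simp: region_def connected_graph_def)
  from \<omega>(1) show ?thesis
  proof (cases rule: phi_cases)
    case (node s)
    have "s \<in> D"
    proof (rule ccontr)
      assume "s \<notin> D"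
      then obtain c d where cd: "{c, d} \<in> ET" "c \<noteq> d" "s \<in> side {c, d} d" "D \<subseteq> side {c, d} c"
        using boundary_side[OF D t0 node(1)] by blast
      then have "orient \<omega> {c, d} d" using node(3) by (auto simp: points_to_Inl)
      with not_oriented_away_from_region[OF \<omega> cd(1,2,4)] show False by contradiction
    qed
    then show ?thesis using node(2) by simp
  next
    case (tree_end \<eta>)
    obtain q where q: "q \<in> \<eta>" using tree_end(1) by (rule edge_end_nonempty)
    have ray: "ray N ET q" using tree_end(1) q by (rule edge_end_ray)
    from tree_ray_tail_region[OF D t0 ray] show ?thesis
    proof (elim disjE exE conjE)
      assume "has_tail_in q D"
      then have "\<eta> \<in> region_ends N ET D" using tree_end(1) q by (intro region_endsI)
      then show ?thesis using tree_end(2) by simp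
    next
      fix c d assume cd: "{c, d} \<in> ET" "c \<noteq> d" "D \<subseteq> side {c, d} c"
        and "has_tail_in q (side {c, d} d)"
      then have "orient \<omega> {c, d} d"
        using tree_end(3) end_in_side_iff[OF tree_end(1) q cd(1)] by (auto simp: points_to_Inr)
      with not_oriented_away_from_region[OF \<omega> cd] show ?thesis by contradiction
    qed
  qed
qed

lemma dominated_region_within_parts:
  assumes D: "region N ET D" and \<omega>: "\<omega> \<in> edge_ends V E"
    and v: "edge_dominates V E v \<omega>" "v \<in> parts D"
  shows "\<exists>C. region V E C \<and> \<omega> \<in> region_ends V E C \<and> C \<subseteq> parts D"
proof -
  have "v \<in> V" using v(1) by (simp add: edge_dominates_def)
  define C where "C = {x. conn V (E - boundary_cut_edges D) v x}"
  have "region V E C"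
    unfolding C_def using graph finite_boundary_cut_edges[OF D] \<open>v \<in> V\<close> by (rule component_region)
  moreover have "\<omega> \<in> region_ends V E C"
    using dominated_region_ends[OF \<open>region V E C\<close> \<omega> v(1)] by (simp add: C_def)
  moreover have "C \<subseteq> parts D"
  proof
    fix x assume "x \<in> C"
    then have "conn V (E - boundary_cut_edges D) v x" by (simp add: C_def)
    then show "x \<in> parts D" using v(2) parts_region_adj_closed[OF D] by (rule conn_closed)
  qed
  ultimately show ?thesis by blast
qed

lemma tree_end_side_within_region:
  assumes D: "region N ET D" and \<eta>: "\<eta> \<in> edge_ends N ET" "\<eta> \<in> region_ends N ET D"
  shows "\<exists>e u. e \<in> ET \<and> u \<in> e \<and> end_in_side \<eta> e u \<and> side e u \<subseteq> D"
proof -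
  obtain q where q: "q \<in> \<eta>" "\<forall>i. q i \<in> D" using \<eta>(2) by (auto simp: region_ends_def)
  have "finite (\<Union>(boundary ET D))"
    using D finite_Union_edges[OF tree_graph] by (auto simp: region_def boundary_def)
  moreover have "\<Union>(boundary ET D) \<subseteq> N"
    using tree_graph by (rule Union_edges_subset) (auto simp: boundary_def)
  ultimately obtain e u where e: "e \<in> ET" "u \<in> e" "end_in_side \<eta> e u"
    and avoid: "side e u \<inter> \<Union>(boundary ET D) = {}"
    using tree_end_side_avoiding[OF \<eta>(1)] by iprover
  obtain n where "q n \<in> side e u" using e(3) q(1) by (auto simp: has_tail_in_def)
  then have "side e u \<subseteq> D" using q(2) avoid by (intro side_within_region) auto
  with e show ?thesis by blast
qed

lemma phi_continuous_at:
  assumes \<omega>: "\<omega> \<in> edge_ends V E" and D: "region N ET D" and in_D: "phi N ET X \<omega> \<in> tree_nbhd D"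
  shows "\<exists>C. region V E C \<and> \<omega> \<in> region_ends V E C \<and> C \<subseteq> parts D"
  using \<omega>
proof (cases rule: phi_cases)
  case (node t)
  have "t \<in> D" using in_D node(2) by auto
  obtain v where v: "v \<in> X t" using part_nonempty[OF node(1)] by blast
  then have "v \<in> parts D" using \<open>t \<in> D\<close> by blast
  then show ?thesis
    using dominated_region_within_parts[OF D \<omega> sink_dominated[OF \<omega> node(1,3) v]] by blast
next
  case (tree_end \<eta>)
  have "\<eta> \<in> region_ends N ET D" using in_D tree_end(2) by auto
  then obtain e u where e: "e \<in> ET" "u \<in> e" "end_in_side \<eta> e u" "side e u \<subseteq> D"
    using tree_end_side_within_region[OF D tree_end(1)] by blast
  have "orient \<omega> e u" using tree_end(3) e by (auto simp: points_to_Inr)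
  obtain r where r: "r \<in> \<omega>" using \<omega> by (rule edge_end_nonempty)
  have "\<omega> \<in> region_ends V E (parts (side e u))"
    using \<open>orient \<omega> e u\<close> r unfolding oriented_towards_def by (intro region_endsI[OF \<omega> r]) blast
  moreover have "parts (side e u) \<subseteq> parts D" using e(4) by blast
  ultimately show ?thesis using parts_side_region[OF e(1,2)] by blast
qed

lemma orient_if_phi_in_side_nbhd:
  assumes \<omega>: "\<omega> \<in> edge_ends V E" and e: "e \<in> ET" "u \<in> e"
    and in_side: "phi N ET X \<omega> \<in> tree_nbhd (side e u)"
  shows "orient \<omega> e u"
  using \<omega>
proof (cases rule: phi_cases)
  case (node s)
  then show ?thesis using in_side e by (auto simp: points_to_Inl)
next
  case (tree_end \<eta>)
  then have "\<eta> \<in> region_ends N ET (side e u)" using in_side by auto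
  then obtain q where q: "q \<in> \<eta>" "\<forall>i. q i \<in> side e u" by (auto simp: region_ends_def)
  then have "end_in_side \<eta> e u"
    using end_in_side_iff[OF tree_end(1) q(1) e(1)] by (auto simp: has_tail_in_def)
  then show ?thesis using tree_end(3) e by (auto simp: points_to_Inr)
qed

lemma region_ends_if_oriented:
  assumes "\<omega> \<in> edge_ends V E" "orient \<omega> e u" "parts (side e u) \<subseteq> C"
  shows "\<omega> \<in> region_ends V E C"
proof -
  obtain r where r: "r \<in> \<omega>" using assms(1) by (rule edge_end_nonempty)
  then have "has_tail_in r (parts (side e u))" using assms(2) by (simp add: oriented_towards_def)
  then have "has_tail_in r C" using assms(3) by (rule has_tail_in_mono)
  then show ?thesis by (rule region_endsI[OF assms(1) r])
qed

lemma points_to_end_region_ends: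
  assumes C: "region V E C" and \<omega>: "\<omega> \<in> edge_ends V E"
    and \<eta>: "\<eta> \<in> edge_ends N ET" "points_to N ET X \<omega> (Inr \<eta>)"
    and q: "q \<in> \<eta>" "\<forall>i. X (q i) \<subseteq> C"
  shows "\<omega> \<in> region_ends V E C"
proof -
  have "finite (boundary E C)" "boundary E C \<subseteq> E"
    using C by (auto simp: region_def boundary_def)
  then obtain e u where e: "e \<in> ET" "u \<in> e" "end_in_side \<eta> e u"
    and avoid: "parts (side e u) \<inter> \<Union>(boundary E C) = {}"
    using tree_end_side_avoiding_edges[OF \<eta>(1)] by iprover
  obtain n where n: "q n \<in> side e u" using e(3) q(1) by (auto simp: has_tail_in_def)
  obtain x where x: "x \<in> X (q n)"
    using part_nonempty tree_ray_node[OF edge_end_ray[OF \<eta>(1) q(1)]] by blast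
  have "parts (side e u) \<subseteq> C"
    using x n q(2) by (intro parts_side_within_region[OF C e(1,2) avoid, of x]) auto
  moreover have "orient \<omega> e u" using \<eta>(2) e by (auto simp: points_to_Inr)
  ultimately show ?thesis using \<omega> region_ends_if_oriented by blast
qed

lemma boundary_component_inside:
  assumes C: "region V E C" and t: "t \<in> N" "X t \<subseteq> C"
    and e: "e \<in> boundary ET {s. conn {s \<in> N. X s \<subseteq> C} ET t s}"
  shows "e \<in> (\<lambda>g. node_of ` g) ` boundary E C"
proof -
  define D0 where "D0 = {s \<in> N. X s \<subseteq> C}"
  define D where "D = {s. conn D0 ET t s}"
  have "t \<in> D0" using t by (simp add: D0_def)
  then have D_D0: "D \<subseteq> D0" using conn_in by (auto simp: D_def)
  obtain a b where ab: "e = {a, b}" "e \<in> ET" "a \<in> D" "b \<notin> D" "a \<in> N" "b \<in> N"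
    using tree_graph e unfolding D_def D0_def by (rule boundary_edgeE)
  have "b \<notin> D0"
  proof
    assume "b \<in> D0"
    then have "adj D0 ET a b" using ab D_D0 by (auto simp: adj_def)
    then have "b \<in> D" using ab(3) conn_step unfolding D_def by (metis mem_Collect_eq)
    then show False using ab(4) by contradiction
  qed
  then have "X b \<inter> C = {}"
    using part_meets_closed[OF _ region_adj_closed[OF C] ab(6)] C ab(6)
    by (auto simp: D0_def region_def)
  obtain p q where pq: "p \<in> X a" "q \<in> X b" "{p, q} \<in> E"
    using adjacent_parts_linked ab(1,2) by blast
  have "p \<in> C" using pq(1) ab(3) D_D0 by (auto simp: D0_def)
  moreover have "q \<notin> C" using \<open>X b \<inter> C = {}\<close> pq(2) by blast
  ultimately have "{p, q} \<in> boundary E C" using pq(3) by (auto simp: boundary_def)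
  moreover have "node_of ` {p, q} = e"
    using node_of_eq pq(1,2) ab D_D0 by (auto simp: D0_def)
  ultimately show ?thesis by blast
qed

lemma region_of_nodes_inside:
  assumes C: "region V E C" and t: "t \<in> N" "X t \<subseteq> C"
  shows "\<exists>D. region N ET D \<and> t \<in> D \<and> (\<forall>s\<in>D. X s \<subseteq> C)"
proof -
  define D0 where "D0 = {s \<in> N. X s \<subseteq> C}"
  define D where "D = {s. conn D0 ET t s}"
  have "t \<in> D0" using t by (simp add: D0_def)
  then have D_D0: "D \<subseteq> D0" using conn_in by (auto simp: D_def)
  have "t \<in> D" by (simp add: D_def)
  have from_t: "conn D ET t s" if "s \<in> D" for s
  proof -
    have "conn D0 ET t s" using that by (simp add: D_def)
    then show ?thesis
      using \<open>t \<in> D\<close> adj_closed_component[of D0 ET t] unfolding D_def by (rule conn_restrict)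
  qed
  have "boundary ET D \<subseteq> (\<lambda>g. node_of ` g) ` boundary E C"
    using boundary_component_inside[OF C t] unfolding D_def D0_def by blast
  moreover have "finite (boundary E C)" using C by (simp add: region_def)
  ultimately have "finite (boundary ET D)" using finite_surj by blast
  then have "region N ET D"
    using D_D0 \<open>t \<in> D\<close> from_t unfolding region_def connected_graph_def D0_def
    by (blast intro: conn_trans conn_sym)
  then show ?thesis using \<open>t \<in> D\<close> D_D0 by (auto simp: D0_def)
qed

lemma region_ends_if_phi_in_inside_nbhd:
  assumes C: "region V E C" and D: "\<forall>s\<in>D. X s \<subseteq> C"
    and \<omega>: "\<omega> \<in> edge_ends V E" "phi N ET X \<omega> \<in> tree_nbhd D"
  shows "\<omega> \<in> region_ends V E C"
  using \<omega>(1)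
proof (cases rule: phi_cases)
  case (node s)
  then have "s \<in> D" using \<omega>(2) by auto
  obtain x where "x \<in> X s" using part_nonempty[OF node(1)] by blast
  then show ?thesis
    using dominated_region_ends[OF C \<omega>(1) sink_dominated[OF \<omega>(1) node(1,3)]] D \<open>s \<in> D\<close>
    by blast
next
  case (tree_end \<eta>)
  then have "\<eta> \<in> region_ends N ET D" using \<omega>(2) by auto
  then obtain q where "q \<in> \<eta>" "\<forall>i. q i \<in> D" by (auto simp: region_ends_def)
  then show ?thesis using points_to_end_region_ends[OF C \<omega>(1) tree_end(1,3)] D by blast
qed

lemma phi_open_at:
  assumes \<omega>: "\<omega> \<in> edge_ends V E" and C: "region V E C" "\<omega> \<in> region_ends V E C"
  shows "\<exists>D. region N ET D \<and> phi N ET X \<omega> \<in> tree_nbhd D \<and>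
    (\<forall>\<omega>'\<in>edge_ends V E. phi N ET X \<omega>' \<in> tree_nbhd D \<longrightarrow> \<omega>' \<in> region_ends V E C)"
  using \<omega>
proof (cases rule: phi_cases)
  case (node t)
  have "X t \<subseteq> C"
    using dominating_vertex_in_region[OF C] sink_dominated[OF \<omega> node(1,3)] by blast
  then obtain D where D: "region N ET D" "t \<in> D" "\<forall>s\<in>D. X s \<subseteq> C"
    using region_of_nodes_inside[OF C(1) node(1)] by blast
  then show ?thesis
    using region_ends_if_phi_in_inside_nbhd[OF C(1) D(3)] node(2) by auto
next
  case (tree_end \<eta>)
  have "finite (boundary E C)" "boundary E C \<subseteq> E"
    using C by (auto simp: region_def boundary_def)
  then obtain e u where e: "e \<in> ET" "u \<in> e" "end_in_side \<eta> e u"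
    and avoid: "parts (side e u) \<inter> \<Union>(boundary E C) = {}"
    using tree_end_side_avoiding_edges[OF tree_end(1)] by iprover
  obtain q where q: "q \<in> \<eta>" using tree_end(1) by (rule edge_end_nonempty)
  then have "\<eta> \<in> region_ends N ET (side e u)" using e(3) tree_end(1) by (intro region_endsI) auto
  then have in_nbhd: "phi N ET X \<omega> \<in> tree_nbhd (side e u)" using tree_end(2) by simp
  obtain r where r: "r \<in> \<omega>" "\<forall>i. r i \<in> C" using C(2) by (auto simp: region_ends_def)
  have "orient \<omega> e u" using tree_end(3) e by (auto simp: points_to_Inr)
  then obtain n where "r n \<in> parts (side e u)"
    using r(1) unfolding oriented_towards_def has_tail_in_def by blast
  then have "parts (side e u) \<subseteq> C"
    using r(2) by (intro parts_side_within_region[OF C(1) e(1,2) avoid]) auto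
  then have "\<forall>\<omega>'\<in>edge_ends V E. phi N ET X \<omega>' \<in> tree_nbhd (side e u) \<longrightarrow> \<omega>' \<in> region_ends V E C"
    using orient_if_phi_in_side_nbhd[OF _ e(1,2)] region_ends_if_oriented by blast
  then show ?thesis using side_region[OF e(1,2)] in_nbhd by blast
qed

lemma phi_embedding: "embedding_map (edge_end_top V E) (full_top N ET) (phi N ET X)"
  unfolding edge_end_top_def full_top_def
proof (rule embedding_map_generated_by)
  show "edge_ends V E \<subseteq> \<Union>{region_ends V E C |C. region V E C}"
    using region_whole[OF graph connected] region_ends_all[of V E] by blast
  show "phi N ET X ` edge_ends V E \<subseteq> full_space N ET" using phi_spec(1) by blast
  have "region N ET N" using tree by (intro region_whole) (simp_all add: tree_def)
  then have "full_space N ET \<subseteq> \<Union>{tree_nbhd D |D. region N ET D}"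
    using region_ends_all[of N ET] unfolding full_space_def by blast
  then show "phi N ET X ` edge_ends V E \<subseteq> \<Union>{tree_nbhd D |D. region N ET D}"
    using phi_spec(1) by blast
  show "inj_on (phi N ET X) (edge_ends V E)" by (rule phi_inj)
next
  fix \<omega> U assume \<omega>: "\<omega> \<in> edge_ends V E" and "U \<in> {tree_nbhd D |D. region N ET D}"
    and in_U: "phi N ET X \<omega> \<in> U"
  then obtain D where D: "region N ET D" "U = tree_nbhd D" by blast
  then obtain C where C: "region V E C" "\<omega> \<in> region_ends V E C" "C \<subseteq> parts D"
    using phi_continuous_at[OF \<omega>] in_U by blast
  have "phi N ET X \<omega>' \<in> U" if \<omega>': "\<omega>' \<in> edge_ends V E \<inter> region_ends V E C" for \<omega>'
  proof -
    obtain r where "r \<in> \<omega>'" "\<forall>i. r i \<in> C" using \<omega>' by (auto simp: region_ends_def)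
    then have "has_tail_in r (parts D)" using C(3) unfolding has_tail_in_def by blast
    then show ?thesis using phi_in_tree_nbhd[OF D(1)] \<omega>' \<open>r \<in> \<omega>'\<close> D(2) by blast
  qed
  then show "\<exists>C\<in>{region_ends V E C |C. region V E C}. \<omega> \<in> C \<and>
      (\<forall>\<omega>'\<in>edge_ends V E \<inter> C. phi N ET X \<omega>' \<in> U)"
    using C(1,2) by blast
next
  fix \<omega> C assume \<omega>: "\<omega> \<in> edge_ends V E" and "C \<in> {region_ends V E C |C. region V E C}"
    and "\<omega> \<in> C"
  then obtain C' where C': "region V E C'" "C = region_ends V E C'" by blast
  then obtain D where D: "region N ET D" "phi N ET X \<omega> \<in> tree_nbhd D"
    and preimage: "\<forall>\<omega>'\<in>edge_ends V E. phi N ET X \<omega>' \<in> tree_nbhd D \<longrightarrow> \<omega>' \<in> C"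
    using phi_open_at[OF \<omega> C'(1)] \<open>\<omega> \<in> C\<close> by iprover
  then show "\<exists>U\<in>{tree_nbhd D |D. region N ET D}. phi N ET X \<omega> \<in> U \<and>
      (\<forall>\<omega>'\<in>edge_ends V E. phi N ET X \<omega>' \<in> U \<longrightarrow> \<omega>' \<in> C)"
    by blast
qed

end

theorem theorem3p1:
  fixes V :: "'v set" and E :: "'v set set" and N :: "'n set" and ET :: "'n set set"
    and X :: "'n \<Rightarrow> 'v set"
  assumes "graph V E" and "connected_graph V E"
    and "tree_cut_decomp V E N ET X"
    and "finite_adhesion E N ET X"
    and "X ` N = edge_blocks V E"
    and "\<forall>t1 t2. {t1, t2} \<in> ET \<longrightarrow> (\<exists>x\<in>X t1. \<exists>y\<in>X t2. {x, y} \<in> E)"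
  shows "embedding_map (edge_end_top V E) (full_top N ET) (phi N ET X)
    \<and> bij_betw (phi N ET X) {\<omega> \<in> edge_ends V E. \<not> (\<exists>v. edge_dominates V E v \<omega>)}
               (Inr ` edge_ends N ET)
    \<and> inj_on (phi N ET X) {\<omega> \<in> edge_ends V E. \<exists>v. edge_dominates V E v \<omega>}
    \<and> phi N ET X ` {\<omega> \<in> edge_ends V E. \<exists>v. edge_dominates V E v \<omega>} \<subseteq> Inl ` N
    \<and> (\<forall>\<omega>\<in>edge_ends V E. \<forall>t. (\<exists>v. edge_dominates V E v \<omega>) \<and> phi N ET X \<omega> = Inl t
         \<longrightarrow> X t = {v. edge_dominates V E v \<omega>})"
proof -
  interpret edge_block_decomp V E N ET X
    using assms by (rule edge_block_decomp.intro)
  have "inj_on (phi N ET X) {\<omega> \<in> edge_ends V E. \<exists>v. edge_dominates V E v \<omega>}"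
    using phi_inj by (rule inj_on_subset) blast
  moreover have "phi N ET X ` {\<omega> \<in> edge_ends V E. \<exists>v. edge_dominates V E v \<omega>} \<subseteq> Inl ` N"
    using dominated_iff_phi_node by blast
  moreover have "\<forall>\<omega>\<in>edge_ends V E. \<forall>t. (\<exists>v. edge_dominates V E v \<omega>) \<and> phi N ET X \<omega> = Inl t
      \<longrightarrow> X t = {v. edge_dominates V E v \<omega>}"
    using phi_node_dominating_vertices by blast
  ultimately show ?thesis using phi_embedding phi_undominated_bij by blast
qed

end
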